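(* Let $N\ge2$ be an integer and let $g\in L^1([0,1])$ satisfy $\lim_{t\to\infty}e^{(N-3)t}\int_0^{e^{-t}}g(s)\,ds=0$. Fix one of the two boundary conditions at $t=0$: either (D) $z(0)=0$, or (Nav) $z'(0)-(N-2)z(0)=0$. Let $X$ be the Banach space of $z\in C^2([0,\infty))$ satisfying the chosen condition at $0$ and $e^tz^{(j)}(t)\to0$ as $t\to\infty$ for $j=0,1,2$, with norm $\|z\|_X=\sum_{j=0}^2\sup_{t\ge0}e^t|z^{(j)}(t)|$, and let $Y$ be the Banach space of $h\in C([0,\infty))$ with $e^th(t)\to0$ as $t\to\infty$, with norm $\sup_{t\ge0}e^t|h(t)|$. Define $\mathcal{F}:X\times\mathbb{R}\to Y$ by $$\mathcal{F}(z,\lambda)(t)=-z''(t)+(N-4)z'(t)+(2N-4)z(t)-\frac{N-1}{2}z(t)^2-\lambda e^{(N-4)t}\int_0^{e^{-t}}g(s)\,ds.$$ Then there exist a neighborhood $U\subset X$ of $0$ and an open neighborhood $I\subset\mathbb{R}$ of $0$ such that for every $\lambda\in I$ there is a unique $z(\lambda)\in U$ with $\mathcal{F}(z(\lambda),\lambda)=0$. Moreover, the map $I\ni\lambda\mapsto z(\lambda)\in X$ is of class $C^1$, $z(0)=0$, and the linear map $\mathcal{F}_z(z(\lambda),\lambda):X\to Y$ is bijective for every $\lambda\in I$. *)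

theory Defs
  imports "HOL-Analysis.Analysis"
begin

datatype bc = Dir | Nav

text \<open>Functions on [0,oo) are represented as real => real, normalised to be 0 on t < 0.
  One-sided derivatives on [0,oo).\<close>
definition d1 :: "(real \<Rightarrow> real) \<Rightarrow> real \<Rightarrow> real" where
  "d1 z t = vector_derivative z (at t within {0..})"

definition d2 :: "(real \<Rightarrow> real) \<Rightarrow> real \<Rightarrow> real" where
  "d2 z t = d1 (d1 z) t"

definition C2_half :: "(real \<Rightarrow> real) \<Rightarrow> bool" where
  "C2_half z \<longleftrightarrow>
     (\<forall>t\<ge>0. (z has_vector_derivative d1 z t) (at t within {0..})) \<and>
     (\<forall>t\<ge>0. (d1 z has_vector_derivative d2 z t) (at t within {0..})) \<and>
     continuous_on {0..} (d2 z)"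

definition bc_holds :: "nat \<Rightarrow> bc \<Rightarrow> (real \<Rightarrow> real) \<Rightarrow> bool" where
  "bc_holds N b z = (case b of Dir \<Rightarrow> z 0 = 0
                             | Nav \<Rightarrow> d1 z 0 - (real N - 2) * z 0 = 0)"

definition Xsp :: "nat \<Rightarrow> bc \<Rightarrow> (real \<Rightarrow> real) set" where
  "Xsp N b = {z. (\<forall>t<0. z t = 0) \<and> C2_half z \<and> bc_holds N b z \<and>
      ((\<lambda>t. exp t * z t) \<longlongrightarrow> 0) at_top \<and>
      ((\<lambda>t. exp t * d1 z t) \<longlongrightarrow> 0) at_top \<and>
      ((\<lambda>t. exp t * d2 z t) \<longlongrightarrow> 0) at_top}"

definition Xnorm :: "(real \<Rightarrow> real) \<Rightarrow> real" where
  "Xnorm z = (SUP t\<in>{0..}. exp t * \<bar>z t\<bar>) + (SUP t\<in>{0..}. exp t * \<bar>d1 z t\<bar>)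
             + (SUP t\<in>{0..}. exp t * \<bar>d2 z t\<bar>)"

definition Ysp :: "(real \<Rightarrow> real) set" where
  "Ysp = {h. (\<forall>t<0. h t = 0) \<and> continuous_on {0..} h \<and>
             ((\<lambda>t. exp t * h t) \<longlongrightarrow> 0) at_top}"

definition Ynorm :: "(real \<Rightarrow> real) \<Rightarrow> real" where
  "Ynorm h = (SUP t\<in>{0..}. exp t * \<bar>h t\<bar>)"

definition Fmap :: "nat \<Rightarrow> (real \<Rightarrow> real) \<Rightarrow> (real \<Rightarrow> real) \<Rightarrow> real \<Rightarrow> real \<Rightarrow> real" where
  "Fmap N g z lam t = (if t < 0 then 0 else
      - d2 z t + (real N - 4) * d1 z t + (2 * real N - 4) * z t
      - (real N - 1) / 2 * (z t)\<^sup>2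
      - lam * exp ((real N - 4) * t) * (LBINT s=0..exp (- t). g s))"

text \<open>L is the Frechet derivative of F(.,lambda) : X -> Y at z (partial derivative F_z).\<close>
definition is_Fz :: "nat \<Rightarrow> bc \<Rightarrow> (real \<Rightarrow> real) \<Rightarrow> (real \<Rightarrow> real) \<Rightarrow> real
                     \<Rightarrow> ((real \<Rightarrow> real) \<Rightarrow> (real \<Rightarrow> real)) \<Rightarrow> bool" where
  "is_Fz N b g z lam L \<longleftrightarrow>
     (\<forall>w\<in>Xsp N b. L w \<in> Ysp) \<and>
     (\<forall>v\<in>Xsp N b. \<forall>w\<in>Xsp N b. \<forall>a c::real.
         L (\<lambda>t. a * v t + c * w t) = (\<lambda>t. a * L v t + c * L w t)) \<and>
     (\<exists>C. \<forall>w\<in>Xsp N b. Ynorm (L w) \<le> C * Xnorm w) \<and>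
     (\<forall>e>0. \<exists>d>0. \<forall>w\<in>Xsp N b. Xnorm w < d \<longrightarrow>
         Ynorm (\<lambda>t. Fmap N g (\<lambda>s. z s + w s) lam t - Fmap N g z lam t - L w t)
           \<le> e * Xnorm w)"

definition C1_into_X :: "nat \<Rightarrow> bc \<Rightarrow> real set \<Rightarrow> (real \<Rightarrow> real \<Rightarrow> real) \<Rightarrow> bool" where
  "C1_into_X N b I zf \<longleftrightarrow>
     (\<exists>zf'. (\<forall>l\<in>I. zf l \<in> Xsp N b \<and> zf' l \<in> Xsp N b) \<and>
       (\<forall>l\<in>I. \<forall>e>0. \<exists>d>0. \<forall>m\<in>I. \<bar>m - l\<bar> < d \<longrightarrow>
          Xnorm (\<lambda>t. zf m t - zf l t - (m - l) * zf' l t) \<le> e * \<bar>m - l\<bar>) \<and>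
       (\<forall>l\<in>I. \<forall>e>0. \<exists>d>0. \<forall>m\<in>I. \<bar>m - l\<bar> < d \<longrightarrow>
          Xnorm (\<lambda>t. zf' m t - zf' l t) < e))"

end

theory Submission
  imports Defs
begin

(* The linearisation of F at z = 0 is L z = -z'' + (N-4) z' + (2N-4) z = -(D - (N-2)) (D + 2) z.
   Inverting the unstable factor by integrating from infinity and the stable factor from 0, with the
   initial value dictated by the boundary condition, gives an explicit inverse of L : X -> Y and the
   a priori bound |z|_X <= C |L z|_Y; moreover L is injective on X. The equation F(z, lambda) = 0
   becomes L z = (N-1)/2 z^2 + lambda f, which for small lambda is a contraction on a small ball of
   exponentially weighted continuous functions. The same a priori bound gives local uniqueness,
   invertibility of F_z = L - (N-1) z, and the estimates showing that lambda |-> z(lambda) is C^1,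
   its derivative being the solution w of F_z w = f. *)

section \<open>Derivatives on the half-line\<close>

lemma at_within_Ici_nontrivial: "(t::real) \<ge> 0 \<Longrightarrow> at t within {0..} \<noteq> bot"
proof -
  assume "t \<ge> 0"
  have "t islimpt {t<..<t+1}" by (rule islimpt_greaterThanLessThan1) simp
  hence "t islimpt {0..}" by (rule islimpt_subset) (use \<open>t\<ge>0\<close> in auto)
  thus ?thesis by (simp add: trivial_limit_within)
qed

definition has_deriv_Ici :: "(real \<Rightarrow> real) \<Rightarrow> (real \<Rightarrow> real) \<Rightarrow> bool" where
  "has_deriv_Ici f f' \<longleftrightarrow> (\<forall>t\<ge>0. (f has_real_derivative f' t) (at t within {0..}))"

lemma d1_eq_derivative: "has_deriv_Ici f f' \<Longrightarrow> t \<ge> 0 \<Longrightarrow> d1 f t = f' t"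
  unfolding d1_def has_deriv_Ici_def
  by (metis at_within_Ici_nontrivial has_real_derivative_iff_has_vector_derivative vector_derivative_within)

lemma has_deriv_Ici_cong:
  assumes "has_deriv_Ici f f'" "\<And>t. t \<ge> 0 \<Longrightarrow> g t = f t" "\<And>t. t \<ge> 0 \<Longrightarrow> g' t = f' t"
  shows "has_deriv_Ici g g'"
  unfolding has_deriv_Ici_def
proof (intro allI impI)
  fix t :: real assume t: "t \<ge> 0"
  have "(f has_real_derivative f' t) (at t within {0..})" using assms(1) t by (simp add: has_deriv_Ici_def)
  hence "(g has_real_derivative f' t) (at t within {0..})"
    by (rule has_field_derivative_transform_within[where d=1]) (use t assms(2) in auto)
  thus "(g has_real_derivative g' t) (at t within {0..})" using assms(3) t by simp
qed

lemma has_deriv_Ici_d1: "has_deriv_Ici f f' \<Longrightarrow> has_deriv_Ici f (d1 f)"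
  by (rule has_deriv_Ici_cong[of f f']) (auto simp: d1_eq_derivative)

lemma has_deriv_Ici_continuous_on: "has_deriv_Ici f f' \<Longrightarrow> continuous_on {0..} f"
  unfolding has_deriv_Ici_def continuous_on_eq_continuous_within
  by (metis DERIV_continuous atLeast_iff)

lemma has_deriv_Ici_integral:
  assumes "continuous_on {0..} G"
  shows "has_deriv_Ici (\<lambda>x. integral {0..x} G) G"
  unfolding has_deriv_Ici_def
proof (intro allI impI)
  fix t :: real assume t: "t \<ge> 0"
  have "continuous_on {0..t+1} G" using assms by (rule continuous_on_subset) auto
  hence "((\<lambda>x. integral {0..x} G) has_real_derivative G t) (at t within {0..t+1})"
    by (rule integral_has_real_derivative) (use t in auto)
  moreover have "at t within {0..t+1} = at t within {0..}"
    by (rule at_within_nhd[where S="{..<t+1}"]) (use t in auto)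
  ultimately show "((\<lambda>x. integral {0..x} G) has_real_derivative G t) (at t within {0..})" by simp
qed

lemma has_deriv_Ici_linear_ode:
  assumes "has_deriv_Ici f (\<lambda>t. c * f t)" "t \<ge> 0"
  shows "f t = f 0 * exp (c * t)"
proof -
  have "\<exists>k. \<forall>s\<in>{0..}. exp (- (c * s)) * f s = k"
  proof (rule has_field_derivative_zero_constant)
    fix s :: real assume s: "s \<in> {0..}"
    have "((\<lambda>s. exp (- (c * s)) * f s) has_real_derivative
        (exp (- (c * s)) * (- c)) * f s + (c * f s) * exp (- (c * s))) (at s within {0..})"
      by (rule DERIV_mult) (use assms(1) s in \<open>auto intro!: derivative_eq_intros simp: has_deriv_Ici_def\<close>)
    thus "((\<lambda>s. exp (- (c * s)) * f s) has_real_derivative 0) (at s within {0..})"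
      by (simp add: algebra_simps)
  qed simp
  then obtain k where "\<And>s. s \<ge> 0 \<Longrightarrow> exp (- (c * s)) * f s = k" by auto
  from this[OF assms(2)] this[of 0] show ?thesis by (simp add: exp_minus field_simps)
qed

lemma has_deriv_Ici_linear_ode_decay:
  assumes "has_deriv_Ici v (\<lambda>t. a * v t)" "a \<ge> -1" "((\<lambda>t. exp t * v t) \<longlongrightarrow> 0) at_top"
  shows "v 0 = 0"
proof (rule ccontr)
  assume ne: "v 0 \<noteq> 0"
  from tendstoD[OF assms(3), of "\<bar>v 0\<bar>"] ne obtain T where T: "\<And>t. t \<ge> T \<Longrightarrow> \<bar>exp t * v t\<bar> < \<bar>v 0\<bar>"
    by (auto simp: eventually_at_top_linorder)
  define t where "t = max T 0"
  have t0: "t \<ge> 0" and tT: "t \<ge> T" by (auto simp: t_def)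
  have "0 \<le> (1 + a) * t" using t0 assms(2) by simp
  hence "\<bar>v 0\<bar> * 1 \<le> \<bar>v 0\<bar> * (exp t * exp (a * t))"
    by (intro mult_left_mono) (auto simp: algebra_simps simp flip: exp_add)
  also have "\<dots> = \<bar>exp t * v t\<bar>" using has_deriv_Ici_linear_ode[OF assms(1) t0] by (simp add: abs_mult)
  finally show False using T[OF tT] by simp
qed

section \<open>Exponentially weighted bounds\<close>

definition decay_le :: "(real \<Rightarrow> real) \<Rightarrow> real \<Rightarrow> bool" where
  "decay_le h M \<longleftrightarrow> (\<forall>t\<ge>0. exp t * \<bar>h t\<bar> \<le> M)"

lemma decay_le_nonneg: "decay_le h M \<Longrightarrow> M \<ge> 0"
  unfolding decay_le_def by (metis abs_ge_zero exp_ge_zero order.trans order_refl zero_le_mult_iff)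

lemma decay_leD: "decay_le h M \<Longrightarrow> t \<ge> 0 \<Longrightarrow> \<bar>h t\<bar> \<le> M * exp (- t)"
  unfolding decay_le_def by (auto simp: exp_minus field_simps)

lemma decay_leI: "(\<And>t. t \<ge> 0 \<Longrightarrow> \<bar>h t\<bar> \<le> M * exp (- t)) \<Longrightarrow> decay_le h M"
  unfolding decay_le_def by (auto simp: exp_minus field_simps)

lemma decay_le_mono: "decay_le h M \<Longrightarrow> M \<le> M' \<Longrightarrow> decay_le h M'"
  unfolding decay_le_def by (meson order.trans)

lemma decay_le_cong: "decay_le u A \<Longrightarrow> (\<And>t. t \<ge> 0 \<Longrightarrow> w t = u t) \<Longrightarrow> decay_le w A"
  unfolding decay_le_def by auto

lemma decay_le_zeroD: "decay_le u 0 \<Longrightarrow> t \<ge> 0 \<Longrightarrow> u t = 0"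
  unfolding decay_le_def by (metis abs_le_zero_iff exp_gt_zero mult_le_0_iff not_le)

lemma decay_le_add: "decay_le u A \<Longrightarrow> decay_le w B \<Longrightarrow> decay_le (\<lambda>t. u t + w t) (A + B)"
  unfolding decay_le_def
proof (intro allI impI)
  fix t :: real assume "\<forall>t\<ge>0. exp t * \<bar>u t\<bar> \<le> A" "\<forall>t\<ge>0. exp t * \<bar>w t\<bar> \<le> B" "t \<ge> 0"
  moreover have "exp t * \<bar>u t + w t\<bar> \<le> exp t * \<bar>u t\<bar> + exp t * \<bar>w t\<bar>"
    by (simp add: abs_triangle_ineq flip: distrib_left)
  ultimately show "exp t * \<bar>u t + w t\<bar> \<le> A + B" by force
qed

lemma decay_le_cmult: "decay_le u A \<Longrightarrow> decay_le (\<lambda>t. c * u t) (\<bar>c\<bar> * A)"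
  unfolding decay_le_def by (auto simp: abs_mult mult.left_commute intro: mult_left_mono)

lemma decay_le_mult_exp:
  assumes "decay_le z A" "decay_le w B" "t \<ge> 0"
  shows "exp t * \<bar>z t * w t\<bar> \<le> A * B * exp (- t)"
proof -
  have a: "exp t * \<bar>z t\<bar> \<le> A" and b: "exp t * \<bar>w t\<bar> \<le> B" using assms unfolding decay_le_def by auto
  have "exp t * (exp t * \<bar>z t * w t\<bar>) = (exp t * \<bar>z t\<bar>) * (exp t * \<bar>w t\<bar>)" by (simp add: abs_mult algebra_simps)
  also have "\<dots> \<le> A * B" using a b decay_le_nonneg[OF assms(1)] by (intro mult_mono) auto
  finally have "exp t * (exp t * \<bar>z t * w t\<bar>) \<le> A * B" .
  thus ?thesis by (simp add: exp_minus field_simps)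
qed

lemma decay_le_mult:
  assumes "decay_le u A" "decay_le w B"
  shows "decay_le (\<lambda>t. u t * w t) (A * B)"
  unfolding decay_le_def
proof (intro allI impI)
  fix t :: real assume t: "t \<ge> 0"
  have "A * B * exp (- t) \<le> A * B * 1"
    using t decay_le_nonneg[OF assms(1)] decay_le_nonneg[OF assms(2)] by (intro mult_left_mono) auto
  thus "exp t * \<bar>u t * w t\<bar> \<le> A * B" using decay_le_mult_exp[OF assms t] by simp
qed

lemma continuous_on_Ici_tendsto_imp_bounded:
  fixes f :: "real \<Rightarrow> real"
  assumes "continuous_on {0..} f" "(f \<longlongrightarrow> (0::real)) at_top"
  shows "\<exists>M. \<forall>t\<ge>0. \<bar>f t\<bar> \<le> M"
proof -
  have "eventually (\<lambda>t. dist (f t) 0 < 1) at_top" using assms(2) tendstoD by force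
  then obtain T where T: "\<And>s. s \<ge> T \<Longrightarrow> \<bar>f s\<bar> < 1" by (auto simp: eventually_at_top_linorder)
  have "compact (f ` {0..max T 0})"
    by (rule compact_continuous_image) (use assms(1) in \<open>auto intro: continuous_on_subset\<close>)
  then obtain B where B: "\<And>x. x \<in> f ` {0..max T 0} \<Longrightarrow> norm x \<le> B"
    using compact_imp_bounded bounded_iff by metis
  show ?thesis
  proof (intro exI[of _ "max B 1"] allI impI)
    fix t :: real assume "t \<ge> 0"
    show "\<bar>f t\<bar> \<le> max B 1"
    proof (cases "t \<le> max T 0")
      case True thus ?thesis using B[of "f t"] \<open>t\<ge>0\<close> by force
    next
      case False thus ?thesis using T[of t] by force
    qed
  qed
qed

lemma decay_le_exists:
  assumes "continuous_on {0..} h" "((\<lambda>t. exp t * h t) \<longlongrightarrow> 0) at_top"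
  shows "\<exists>M. decay_le h M"
proof -
  have "continuous_on {0..} (\<lambda>t. exp t * h t)" using assms(1) by (auto intro!: continuous_intros)
  from continuous_on_Ici_tendsto_imp_bounded[OF this assms(2)]
  obtain M where "\<forall>t\<ge>0. \<bar>exp t * h t\<bar> \<le> M" by auto
  thus ?thesis by (auto simp: decay_le_def abs_mult)
qed

lemma tendsto_zero_at_topI:
  fixes f :: "real \<Rightarrow> real"
  assumes "\<And>e. e > 0 \<Longrightarrow> \<exists>T. \<forall>t\<ge>T. \<bar>f t\<bar> \<le> e"
  shows "(f \<longlongrightarrow> (0::real)) at_top"
proof (rule tendstoI)
  fix e :: real assume "e > 0"
  then obtain T where "\<forall>t\<ge>T. \<bar>f t\<bar> \<le> e/2" using assms[of "e/2"] by auto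
  thus "eventually (\<lambda>t. dist (f t) 0 < e) at_top"
    using \<open>e>0\<close> by (auto intro!: eventually_at_top_linorderI[of T])
qed

lemma weighted_tendsto_zeroD:
  fixes h :: "real \<Rightarrow> real"
  assumes "((\<lambda>t. exp t * h t) \<longlongrightarrow> (0::real)) at_top" "e > 0"
  shows "\<exists>T\<ge>0. \<forall>s\<ge>T. \<bar>h s\<bar> \<le> e * exp (- s)"
proof -
  have "eventually (\<lambda>t. dist (exp t * h t) 0 < e) at_top" using assms tendstoD by blast
  then obtain T where T: "\<And>s. s \<ge> T \<Longrightarrow> \<bar>exp s * h s\<bar> < e" by (auto simp: eventually_at_top_linorder)
  show ?thesis
  proof (intro exI[of _ "max T 0"] conjI allI impI)
    fix s assume "s \<ge> max T 0"
    hence "exp s * \<bar>h s\<bar> < e" using T[of s] by (simp add: abs_mult)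
    hence "\<bar>h s\<bar> < e / exp s" by (simp add: field_simps)
    thus "\<bar>h s\<bar> \<le> e * exp (- s)" by (simp add: exp_minus field_simps)
  qed simp
qed

lemma Ynorm_le: "decay_le h M \<Longrightarrow> Ynorm h \<le> M"
  unfolding Ynorm_def decay_le_def by (rule cSUP_least) auto

lemma decay_le_Ynorm:
  assumes "continuous_on {0..} h" "((\<lambda>t. exp t * h t) \<longlongrightarrow> 0) at_top"
  shows "decay_le h (Ynorm h)"
proof -
  obtain M where "decay_le h M" using decay_le_exists[OF assms] by auto
  hence "bdd_above ((\<lambda>t. exp t * \<bar>h t\<bar>) ` {0..})" unfolding decay_le_def bdd_above_def by auto
  thus ?thesis unfolding decay_le_def Ynorm_def by (auto intro!: cSUP_upper)
qed

lemma YspD: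
  assumes "h \<in> Ysp"
  shows "\<And>t. t < 0 \<Longrightarrow> h t = 0" "continuous_on {0..} h" "((\<lambda>t. exp t * h t) \<longlongrightarrow> 0) at_top"
  using assms unfolding Ysp_def by auto

lemma decay_le_Ynorm_Ysp: "h \<in> Ysp \<Longrightarrow> decay_le h (Ynorm h)"
  using decay_le_Ynorm YspD by blast

lemma Xsp_has_deriv:
  assumes "z \<in> Xsp N b"
  shows "has_deriv_Ici z (d1 z)" "has_deriv_Ici (d1 z) (d2 z)"
  using assms unfolding Xsp_def C2_half_def has_deriv_Ici_def
  by (auto simp: has_real_derivative_iff_has_vector_derivative)

lemma XspD:
  assumes "z \<in> Xsp N b"
  shows "\<And>t. t < 0 \<Longrightarrow> z t = 0" "bc_holds N b z" "continuous_on {0..} (d2 z)"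
    "((\<lambda>t. exp t * z t) \<longlongrightarrow> 0) at_top"
    "((\<lambda>t. exp t * d1 z t) \<longlongrightarrow> 0) at_top"
    "((\<lambda>t. exp t * d2 z t) \<longlongrightarrow> 0) at_top"
    "continuous_on {0..} z" "continuous_on {0..} (d1 z)"
  using assms Xsp_has_deriv[OF assms] has_deriv_Ici_continuous_on unfolding Xsp_def C2_half_def by auto

lemma XspI:
  assumes "\<And>t. t < 0 \<Longrightarrow> z t = 0" "has_deriv_Ici z z1" "has_deriv_Ici z1 z2" "continuous_on {0..} z2"
    "case b of Dir \<Rightarrow> z 0 = 0 | Nav \<Rightarrow> z1 0 - (real N - 2) * z 0 = 0"
    "((\<lambda>t. exp t * z t) \<longlongrightarrow> 0) at_top"
    "((\<lambda>t. exp t * z1 t) \<longlongrightarrow> 0) at_top"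
    "((\<lambda>t. exp t * z2 t) \<longlongrightarrow> 0) at_top"
  shows "z \<in> Xsp N b" "\<And>t. t \<ge> 0 \<Longrightarrow> d1 z t = z1 t" "\<And>t. t \<ge> 0 \<Longrightarrow> d2 z t = z2 t"
proof -
  have e1: "\<And>t. t \<ge> 0 \<Longrightarrow> d1 z t = z1 t" using d1_eq_derivative[OF assms(2)] .
  have h1: "has_deriv_Ici (d1 z) z2" by (rule has_deriv_Ici_cong[OF assms(3)]) (auto simp: e1)
  have e2: "\<And>t. t \<ge> 0 \<Longrightarrow> d2 z t = z2 t" unfolding d2_def using d1_eq_derivative[OF h1] .
  show "\<And>t. t \<ge> 0 \<Longrightarrow> d1 z t = z1 t" by (rule e1)
  show "\<And>t. t \<ge> 0 \<Longrightarrow> d2 z t = z2 t" by (rule e2)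
  have h0: "has_deriv_Ici z (d1 z)" using has_deriv_Ici_d1[OF assms(2)] .
  have h2: "has_deriv_Ici (d1 z) (d2 z)" using has_deriv_Ici_cong[OF h1] e2 by auto
  have c2: "continuous_on {0..} (d2 z)"
    using assms(4) by (rule continuous_on_eq) (auto simp: e2)
  have l1: "((\<lambda>t. exp t * d1 z t) \<longlongrightarrow> 0) at_top"
    using assms(7) by (rule Lim_transform_eventually) (auto intro!: eventually_at_top_linorderI[of 0] simp: e1)
  have l2: "((\<lambda>t. exp t * d2 z t) \<longlongrightarrow> 0) at_top"
    using assms(8) by (rule Lim_transform_eventually) (auto intro!: eventually_at_top_linorderI[of 0] simp: e2)
  have bcz: "bc_holds N b z" using assms(5) e1[of 0] by (cases b) (auto simp: bc_holds_def)
  show "z \<in> Xsp N b"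
    unfolding Xsp_def C2_half_def using h0 h2 c2 l1 l2 bcz assms(1,6)
    by (auto simp: has_deriv_Ici_def has_real_derivative_iff_has_vector_derivative)
qed

lemma Xsp_lincomb:
  assumes v: "v \<in> Xsp N b" and w: "w \<in> Xsp N b"
  shows "(\<lambda>t. a * v t + c * w t) \<in> Xsp N b"
    "\<And>t. t \<ge> 0 \<Longrightarrow> d1 (\<lambda>t. a * v t + c * w t) t = a * d1 v t + c * d1 w t"
    "\<And>t. t \<ge> 0 \<Longrightarrow> d2 (\<lambda>t. a * v t + c * w t) t = a * d2 v t + c * d2 w t"
proof -
  note hv = Xsp_has_deriv[OF v] and hw = Xsp_has_deriv[OF w] and pv = XspD[OF v] and pw = XspD[OF w]
  have H1: "has_deriv_Ici (\<lambda>t. a * v t + c * w t) (\<lambda>t. a * d1 v t + c * d1 w t)"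
    using hv(1) hw(1) unfolding has_deriv_Ici_def by (auto intro!: derivative_eq_intros)
  have H2: "has_deriv_Ici (\<lambda>t. a * d1 v t + c * d1 w t) (\<lambda>t. a * d2 v t + c * d2 w t)"
    using hv(2) hw(2) unfolding has_deriv_Ici_def by (auto intro!: derivative_eq_intros)
  have C: "continuous_on {0..} (\<lambda>t. a * d2 v t + c * d2 w t)"
    using pv(3) pw(3) by (auto intro!: continuous_intros)
  have lim: "((\<lambda>t. exp t * (a * f t + c * k t)) \<longlongrightarrow> 0) at_top"
    if "((\<lambda>t. exp t * f t) \<longlongrightarrow> 0) at_top" "((\<lambda>t. exp t * k t) \<longlongrightarrow> 0) at_top" for f k :: "real \<Rightarrow> real"
  proof -
    have "((\<lambda>t. a * (exp t * f t) + c * (exp t * k t)) \<longlongrightarrow> a * 0 + c * 0) at_top"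
      by (intro tendsto_intros that)
    thus ?thesis by (simp add: algebra_simps)
  qed
  have B: "case b of Dir \<Rightarrow> a * v 0 + c * w 0 = 0
      | Nav \<Rightarrow> (a * d1 v 0 + c * d1 w 0) - (real N - 2) * (a * v 0 + c * w 0) = 0"
  proof (cases b)
    case Dir thus ?thesis using pv(2) pw(2) by (simp add: bc_holds_def)
  next
    case Nav
    have "d1 v 0 - (real N - 2) * v 0 = 0" "d1 w 0 - (real N - 2) * w 0 = 0"
      using pv(2) pw(2) Nav by (auto simp: bc_holds_def)
    moreover have "(a * d1 v 0 + c * d1 w 0) - (real N - 2) * (a * v 0 + c * w 0)
       = a * (d1 v 0 - (real N - 2) * v 0) + c * (d1 w 0 - (real N - 2) * w 0)"
      by (simp add: algebra_simps)
    ultimately show ?thesis using Nav by simp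
  qed
  note R = XspI[OF _ H1 H2 C B] lim[OF pv(4) pw(4)] lim[OF pv(5) pw(5)] lim[OF pv(6) pw(6)]
  show "(\<lambda>t. a * v t + c * w t) \<in> Xsp N b"
    "\<And>t. t \<ge> 0 \<Longrightarrow> d1 (\<lambda>t. a * v t + c * w t) t = a * d1 v t + c * d1 w t"
    "\<And>t. t \<ge> 0 \<Longrightarrow> d2 (\<lambda>t. a * v t + c * w t) t = a * d2 v t + c * d2 w t"
    using R pv(1) pw(1) by auto
qed

lemma zero_in_Xsp:
  "(\<lambda>t. 0) \<in> Xsp N b" "\<And>t. t \<ge> 0 \<Longrightarrow> d1 (\<lambda>t. 0) t = 0" "\<And>t. t \<ge> 0 \<Longrightarrow> d2 (\<lambda>t. 0) t = 0"
proof -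
  have h: "has_deriv_Ici (\<lambda>t. 0) (\<lambda>t. 0)" by (simp add: has_deriv_Ici_def)
  have bc: "case b of Dir \<Rightarrow> (0::real) = 0 | Nav \<Rightarrow> (0::real) - (real N - 2) * 0 = 0" by (cases b) auto
  show "(\<lambda>t. 0) \<in> Xsp N b" "\<And>t. t \<ge> 0 \<Longrightarrow> d1 (\<lambda>t. 0) t = 0" "\<And>t. t \<ge> 0 \<Longrightarrow> d2 (\<lambda>t. 0) t = 0"
    using XspI[of "\<lambda>t. 0", OF _ h h _ bc] by auto
qed

lemma decay_le_Xsp: "z \<in> Xsp N b \<Longrightarrow> decay_le z (Ynorm z)"
  using decay_le_Ynorm[OF XspD(7,4)] by blast

lemma Xnorm_le:
  assumes "decay_le z A" "decay_le (d1 z) B" "decay_le (d2 z) C"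
  shows "Xnorm z \<le> A + B + C"
  using Ynorm_le[OF assms(1)] Ynorm_le[OF assms(2)] Ynorm_le[OF assms(3)]
  unfolding Xnorm_def Ynorm_def by linarith

lemma decay_le_Xnorm:
  assumes z: "z \<in> Xsp N b"
  shows "decay_le z (Xnorm z)" "decay_le (d1 z) (Xnorm z)" "decay_le (d2 z) (Xnorm z)" "Xnorm z \<ge> 0"
proof -
  note p = XspD[OF z]
  have a: "decay_le z (Ynorm z)" by (rule decay_le_Ynorm[OF p(7) p(4)])
  have b: "decay_le (d1 z) (Ynorm (d1 z))" by (rule decay_le_Ynorm[OF p(8) p(5)])
  have c: "decay_le (d2 z) (Ynorm (d2 z))" by (rule decay_le_Ynorm[OF p(3) p(6)])
  have X: "Xnorm z = Ynorm z + Ynorm (d1 z) + Ynorm (d2 z)" by (simp add: Xnorm_def Ynorm_def)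
  note n = decay_le_nonneg[OF a] decay_le_nonneg[OF b] decay_le_nonneg[OF c]
  show "decay_le z (Xnorm z)" by (rule decay_le_mono[OF a]) (use X n in linarith)
  show "decay_le (d1 z) (Xnorm z)" by (rule decay_le_mono[OF b]) (use X n in linarith)
  show "decay_le (d2 z) (Xnorm z)" by (rule decay_le_mono[OF c]) (use X n in linarith)
  show "Xnorm z \<ge> 0" using X n by linarith
qed

section \<open>The linear operator and its inverse\<close>

definition lin_op :: "nat \<Rightarrow> (real \<Rightarrow> real) \<Rightarrow> real \<Rightarrow> real" where
  "lin_op N z t = (if t < 0 then 0 else - d2 z t + (real N - 4) * d1 z t + (2 * real N - 4) * z t)"

lemma lin_op_lincomb:
  assumes v: "v \<in> Xsp N b" and w: "w \<in> Xsp N b"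
  shows "lin_op N (\<lambda>t. a * v t + c * w t) = (\<lambda>t. a * lin_op N v t + c * lin_op N w t)"
proof
  fix t :: real
  show "lin_op N (\<lambda>t. a * v t + c * w t) t = a * lin_op N v t + c * lin_op N w t"
    using Xsp_lincomb(2,3)[OF v w, of t a c] by (cases "t < 0") (auto simp: lin_op_def algebra_simps)
qed

lemma Xsp_diff_scaled:
  assumes v: "v \<in> Xsp N b" and w: "w \<in> Xsp N b"
  shows "(\<lambda>t. v t - c * w t) \<in> Xsp N b"
    "lin_op N (\<lambda>t. v t - c * w t) = (\<lambda>t. lin_op N v t - c * lin_op N w t)"
proof -
  have e: "(\<lambda>t. v t - c * w t) = (\<lambda>t. 1 * v t + (- c) * w t)" by simp
  show "(\<lambda>t. v t - c * w t) \<in> Xsp N b" unfolding e by (rule Xsp_lincomb(1)[OF v w])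
  show "lin_op N (\<lambda>t. v t - c * w t) = (\<lambda>t. lin_op N v t - c * lin_op N w t)"
    unfolding e lin_op_lincomb[OF v w] by simp
qed

lemmas Xsp_diff = Xsp_diff_scaled[where c=1, simplified]

lemma Xsp_add:
  assumes v: "v \<in> Xsp N b" and w: "w \<in> Xsp N b"
  shows "(\<lambda>t. v t + w t) \<in> Xsp N b" "lin_op N (\<lambda>t. v t + w t) = (\<lambda>t. lin_op N v t + lin_op N w t)"
  using Xsp_diff_scaled[OF v w, of "-1"] by simp_all

lemma lin_op_in_Ysp:
  assumes z: "z \<in> Xsp N b"
  shows "lin_op N z \<in> Ysp"
proof -
  note p = XspD[OF z]
  have c: "continuous_on {0..} (lin_op N z)"
  proof (rule continuous_on_eq[where f="\<lambda>t. - d2 z t + (real N - 4) * d1 z t + (2 * real N - 4) * z t"])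
    show "continuous_on {0..} (\<lambda>t. - d2 z t + (real N - 4) * d1 z t + (2 * real N - 4) * z t)"
      using p by (auto intro!: continuous_intros)
  qed (auto simp: lin_op_def)
  have "((\<lambda>t. - (exp t * d2 z t) + (real N - 4) * (exp t * d1 z t) + (2 * real N - 4) * (exp t * z t))
      \<longlongrightarrow> - 0 + (real N - 4) * 0 + (2 * real N - 4) * 0) at_top"
    by (intro tendsto_intros p)
  hence "((\<lambda>t. - (exp t * d2 z t) + (real N - 4) * (exp t * d1 z t) + (2 * real N - 4) * (exp t * z t))
      \<longlongrightarrow> 0) at_top" by simp
  hence "((\<lambda>t. exp t * lin_op N z t) \<longlongrightarrow> 0) at_top"
    by (rule Lim_transform_eventually)
       (auto intro!: eventually_at_top_linorderI[of 0] simp: lin_op_def algebra_simps)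
  thus ?thesis using c by (auto simp: Ysp_def lin_op_def)
qed

text \<open>The decaying solution of v' = c v - h for c \<ge> 0.\<close>

definition tail_integral :: "real \<Rightarrow> (real \<Rightarrow> real) \<Rightarrow> real \<Rightarrow> real" where
  "tail_integral c h t = exp (c * t) * integral {t..} (\<lambda>s. exp (- (c * s)) * h s)"

lemma integrable_on_tail:
  fixes h :: "real \<Rightarrow> real"
  assumes c: "c \<ge> 0" and hc: "continuous_on {0..} h" and hb: "decay_le h M" and t: "t \<ge> 0"
  shows "(\<lambda>s. exp (- (c * s)) * h s) integrable_on {t..}"
proof (rule measurable_bounded_by_integrable_imp_integrable_real[where g="\<lambda>s. M * exp (- (c+1) * s)"])
  have "continuous_on {t..} (\<lambda>s. exp (- (c * s)) * h s)"
    using hc t by (auto intro!: continuous_intros intro: continuous_on_subset)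
  thus "(\<lambda>s. exp (- (c * s)) * h s) \<in> borel_measurable (lebesgue_on {t..})"
    by (rule continuous_imp_measurable_on_sets_lebesgue) simp
  have "(\<lambda>x. exp (- (c + 1) * x)) integrable_on {t..}"
    using integrable_on_exp_minus_to_infinity[of "c+1" t] c by simp
  from integrable_on_mult_left[OF this, of M]
  show "(\<lambda>s. M * exp (- (c+1) * s)) integrable_on {t..}" by (simp add: mult.commute)
  show "{t..} \<in> sets lebesgue" by simp
  fix s assume s: "s \<in> {t..}"
  have "\<bar>exp (- (c * s)) * h s\<bar> = exp (- (c * s)) * \<bar>h s\<bar>" by (simp add: abs_mult)
  also have "\<dots> \<le> exp (- (c * s)) * (M * exp (-s))"
    using decay_leD[OF hb, of s] s t by (intro mult_left_mono) auto
  also have "\<dots> = M * exp (- (c+1) * s)" by (simp add: algebra_simps flip: exp_add)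
  finally show "\<bar>exp (- (c * s)) * h s\<bar> \<le> M * exp (- (c+1) * s)" .
qed

lemma has_deriv_Ici_tail_integral:
  fixes h :: "real \<Rightarrow> real"
  assumes c: "c \<ge> 0" and hc: "continuous_on {0..} h" and hb: "decay_le h M"
  shows "has_deriv_Ici (tail_integral c h) (\<lambda>t. c * tail_integral c h t - h t)"
proof -
  let ?F = "\<lambda>s. exp (- (c * s)) * h s"
  define I0 where "I0 = integral {0..} ?F"
  have split: "integral {t..} ?F = I0 - integral {0..t} ?F" if t: "t \<ge> 0" for t
  proof -
    have i0: "?F integrable_on {0..}" using integrable_on_tail[OF c hc hb, of 0] by simp
    have i1: "?F integrable_on {0..t}" by (rule integrable_on_subinterval[OF i0]) auto
    have "(?F has_integral (integral {0..t} ?F + integral {t..} ?F)) ({0..t} \<union> {t..})"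
    proof (rule has_integral_Un)
      show "negligible ({0..t} \<inter> {t..})" using t by (simp add: Int_atLeastAtMost)
    qed (use i1 integrable_on_tail[OF c hc hb t] in \<open>auto simp: integrable_integral\<close>)
    moreover have "{0..t} \<union> {t..} = {0..}" using t by auto
    ultimately show ?thesis by (simp add: I0_def integral_unique)
  qed
  have cF: "continuous_on {0..} ?F" using hc by (auto intro!: continuous_intros)
  have H: "has_deriv_Ici (\<lambda>t. exp (c * t) * (I0 - integral {0..t} ?F))
     (\<lambda>t. c * exp (c * t) * (I0 - integral {0..t} ?F) - exp (c * t) * ?F t)"
    unfolding has_deriv_Ici_def
  proof (intro allI impI)
    fix t :: real assume t: "t \<ge> 0"
    have d: "((\<lambda>x. integral {0..x} ?F) has_real_derivative ?F t) (at t within {0..})"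
      using has_deriv_Ici_integral[OF cF] t by (simp add: has_deriv_Ici_def)
    show "((\<lambda>t. exp (c * t) * (I0 - integral {0..t} ?F)) has_real_derivative
      c * exp (c * t) * (I0 - integral {0..t} ?F) - exp (c * t) * ?F t) (at t within {0..})"
      by (rule derivative_eq_intros d refl | simp)+
  qed
  show ?thesis
  proof (rule has_deriv_Ici_cong[OF H])
    fix t :: real assume t: "t \<ge> 0"
    show "tail_integral c h t = exp (c * t) * (I0 - integral {0..t} ?F)"
      unfolding tail_integral_def using split[OF t] by simp
    have "exp (c * t) * ?F t = h t" by (simp add: exp_minus field_simps)
    thus "c * tail_integral c h t - h t = c * exp (c * t) * (I0 - integral {0..t} ?F) - exp (c * t) * ?F t"
      unfolding tail_integral_def using split[OF t] by simp
  qed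
qed

lemma tail_integral_bound:
  fixes h :: "real \<Rightarrow> real"
  assumes c: "c \<ge> 0" and hc: "continuous_on {0..} h" and hb: "decay_le h M"
    and t0: "t0 \<ge> 0" and he: "\<And>s. s \<ge> t0 \<Longrightarrow> \<bar>h s\<bar> \<le> e * exp (- s)" and t: "t \<ge> t0"
  shows "\<bar>tail_integral c h t\<bar> \<le> e * exp (- t)"
proof -
  let ?F = "\<lambda>s. exp (- (c * s)) * h s"
  have e0: "e \<ge> 0" using he[of t0] by (metis abs_ge_zero exp_gt_zero order.trans order_refl zero_le_mult_iff not_le)
  have g: "((\<lambda>s. e * exp (- (c+1) * s)) has_integral (e * (exp (- (c+1) * t) / (c+1)))) {t..}"
    using has_integral_mult_right[OF has_integral_exp_minus_to_infinity[of "c+1" t]] c by simp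
  have bd: "norm (?F s) \<le> e * exp (- (c+1) * s)" if s: "s \<in> {t..}" for s
  proof -
    have "\<bar>?F s\<bar> = exp (- (c * s)) * \<bar>h s\<bar>" by (simp add: abs_mult)
    also have "\<dots> \<le> exp (- (c * s)) * (e * exp (-s))"
      using he[of s] s t by (intro mult_left_mono) auto
    also have "\<dots> = e * exp (- (c+1) * s)" by (simp add: algebra_simps flip: exp_add)
    finally show ?thesis by simp
  qed
  have "\<bar>integral {t..} ?F\<bar> \<le> integral {t..} (\<lambda>s. e * exp (- (c+1) * s))"
    using integral_norm_bound_integral[OF integrable_on_tail[OF c hc hb] _ bd] g t t0 by auto
  also have "\<dots> = e * (exp (- (c+1) * t) / (c+1))" using g by (rule integral_unique)
  finally have I: "\<bar>integral {t..} ?F\<bar> \<le> e * (exp (- (c+1) * t) / (c+1))" .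
  have "\<bar>tail_integral c h t\<bar> = exp (c * t) * \<bar>integral {t..} ?F\<bar>"
    unfolding tail_integral_def by (simp add: abs_mult)
  also have "\<dots> \<le> exp (c * t) * (e * (exp (- (c+1) * t) / (c+1)))" using I by (rule mult_left_mono) simp
  also have "\<dots> = e * exp (-t) / (c+1)" by (simp add: algebra_simps flip: exp_add)
  also have "\<dots> \<le> e * exp (-t)" using c e0 by (simp add: divide_le_eq mult_le_cancel_left1 algebra_simps)
  finally show ?thesis .
qed

lemma tail_integral_decay:
  fixes h :: "real \<Rightarrow> real"
  assumes c: "c \<ge> 0" and hc: "continuous_on {0..} h" and hb: "decay_le h M"
    and hlim: "((\<lambda>t. exp t * h t) \<longlongrightarrow> 0) at_top"
  shows "decay_le (tail_integral c h) M" "((\<lambda>t. exp t * tail_integral c h t) \<longlongrightarrow> 0) at_top"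
proof -
  show "decay_le (tail_integral c h) M"
    by (rule decay_leI, rule tail_integral_bound[OF c hc hb order_refl]) (auto intro: decay_leD[OF hb])
  show "((\<lambda>t. exp t * tail_integral c h t) \<longlongrightarrow> 0) at_top"
  proof (rule tendsto_zero_at_topI)
    fix e :: real assume e: "e > 0"
    obtain T where T: "T \<ge> 0" "\<And>s. s \<ge> T \<Longrightarrow> \<bar>h s\<bar> \<le> e * exp (- s)"
      using weighted_tendsto_zeroD[OF hlim e] by auto
    have "\<bar>exp t * tail_integral c h t\<bar> \<le> e" if t: "t \<ge> T" for t
      using tail_integral_bound[OF c hc hb T t] by (simp add: abs_mult exp_minus field_simps)
    thus "\<exists>T. \<forall>t\<ge>T. \<bar>exp t * tail_integral c h t\<bar> \<le> e" by blast
  qed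
qed

text \<open>The solution of W' = -2 W + v with W(0) = w.\<close>

definition damped_integral :: "real \<Rightarrow> (real \<Rightarrow> real) \<Rightarrow> real \<Rightarrow> real" where
  "damped_integral w v t = exp (- (2 * t)) * (w + integral {0..t} (\<lambda>s. exp (2 * s) * v s))"

lemma integral_exp2_bound:
  fixes v :: "real \<Rightarrow> real" and T t e :: real
  assumes "T \<le> t" "continuous_on {T..t} v" "\<And>s. s \<in> {T..t} \<Longrightarrow> \<bar>v s\<bar> \<le> e * exp (- s)"
  shows "\<bar>integral {T..t} (\<lambda>s. exp (2 * s) * v s)\<bar> \<le> e * (exp t - exp T)"
proof -
  have i1: "(\<lambda>s. exp (2 * s) * v s) integrable_on {T..t}"
    by (rule integrable_continuous_interval) (use assms(2) in \<open>auto intro!: continuous_intros\<close>)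
  have "((\<lambda>s. exp s) has_integral (exp t - exp T)) {T..t}"
    using fundamental_theorem_of_calculus[of T t exp exp] assms(1)
    by (auto simp: has_real_derivative_iff_has_vector_derivative[symmetric]
          intro: DERIV_exp[THEN has_field_derivative_at_within])
  hence h2: "((\<lambda>s. e * exp s) has_integral (e * (exp t - exp T))) {T..t}"
    using has_integral_mult_right by blast
  have bd: "norm (exp (2 * s) * v s) \<le> e * exp s" if s: "s \<in> {T..t}" for s
  proof -
    have "\<bar>exp (2 * s) * v s\<bar> = exp (2 * s) * \<bar>v s\<bar>" by (simp add: abs_mult)
    also have "\<dots> \<le> exp (2 * s) * (e * exp (-s))" using assms(3)[OF s] by (simp add: mult_left_mono)
    also have "\<dots> = e * exp s"
      by (simp add: exp_minus field_simps flip: exp_add)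
    finally show ?thesis by simp
  qed
  have "\<bar>integral {T..t} (\<lambda>s. exp (2 * s) * v s)\<bar> \<le> integral {T..t} (\<lambda>s. e * exp s)"
    using integral_norm_bound_integral[OF i1 _ bd] h2 by auto
  also have "\<dots> = e * (exp t - exp T)" using h2 by (rule integral_unique)
  finally show ?thesis .
qed

lemma has_deriv_Ici_damped_integral:
  assumes "continuous_on {0..} v"
  shows "has_deriv_Ici (damped_integral w v) (\<lambda>t. -2 * damped_integral w v t + v t)"
  unfolding has_deriv_Ici_def
proof (intro allI impI)
  fix t :: real assume t: "t \<ge> 0"
  have "continuous_on {0..} (\<lambda>s. exp (2 * s) * v s)" using assms by (auto intro!: continuous_intros)
  from has_deriv_Ici_integral[OF this] t
  have d: "((\<lambda>x. integral {0..x} (\<lambda>s. exp (2 * s) * v s)) has_real_derivative exp (2 * t) * v t)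
      (at t within {0..})" by (simp add: has_deriv_Ici_def)
  have "(damped_integral w v has_real_derivative
      exp (- (2 * t)) * (- 2) * (w + integral {0..t} (\<lambda>s. exp (2 * s) * v s)) + exp (- (2 * t)) * (exp (2 * t) * v t))
      (at t within {0..})"
    unfolding damped_integral_def[abs_def] by (rule derivative_eq_intros d refl | simp)+
  thus "(damped_integral w v has_real_derivative -2 * damped_integral w v t + v t) (at t within {0..})"
    by (simp add: damped_integral_def algebra_simps flip: exp_add)
qed

lemma damped_integral_bound:
  assumes cv: "continuous_on {0..} v" and vb: "decay_le v M" and w: "\<bar>w\<bar> \<le> M" and t: "t \<ge> 0"
  shows "\<bar>damped_integral w v t\<bar> \<le> M * exp (- t)"
proof -
  have "continuous_on {0..t} v" using cv by (rule continuous_on_subset) auto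
  hence "\<bar>integral {0..t} (\<lambda>s. exp (2 * s) * v s)\<bar> \<le> M * (exp t - 1)"
    using integral_exp2_bound[of 0 t v M] t decay_leD[OF vb] by auto
  hence "\<bar>w + integral {0..t} (\<lambda>s. exp (2 * s) * v s)\<bar> \<le> M * exp t" using w by (simp add: algebra_simps)
  hence "exp (- (2 * t)) * \<bar>w + integral {0..t} (\<lambda>s. exp (2 * s) * v s)\<bar> \<le> exp (- (2 * t)) * (M * exp t)"
    by (simp add: mult_left_mono)
  also have "\<dots> = M * exp (- t)" by (simp add: algebra_simps flip: exp_add)
  finally show ?thesis by (simp add: damped_integral_def abs_mult)
qed

lemma damped_integral_tendsto:
  assumes cv: "continuous_on {0..} v" and vlim: "((\<lambda>t. exp t * v t) \<longlongrightarrow> 0) at_top"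
  shows "((\<lambda>t. exp t * damped_integral w v t) \<longlongrightarrow> 0) at_top"
proof (rule tendsto_zero_at_topI)
  fix e :: real assume e: "e > 0"
  let ?I = "\<lambda>T t. integral {T..t} (\<lambda>s. exp (2 * s) * v s)"
  obtain T where T: "T \<ge> 0" "\<And>s. s \<ge> T \<Longrightarrow> \<bar>v s\<bar> \<le> (e/2) * exp (- s)"
    using weighted_tendsto_zeroD[OF vlim, of "e/2"] e by auto
  define K where "K = \<bar>w\<bar> + \<bar>?I 0 T\<bar>"
  have "((\<lambda>t. K * exp (- t)) \<longlongrightarrow> K * 0) at_top"
    by (intro tendsto_intros filterlim_compose[OF exp_at_bot filterlim_uminus_at_bot_at_top])
  from tendstoD[OF this, of "e/2"] e obtain T' where T': "\<And>t. t \<ge> T' \<Longrightarrow> \<bar>K * exp (- t)\<bar> < e/2"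
    by (auto simp: eventually_at_top_linorder dist_real_def)
  have "\<bar>exp t * damped_integral w v t\<bar> \<le> e" if t: "t \<ge> max T T'" for t
  proof -
    have int: "(\<lambda>s. exp (2 * s) * v s) integrable_on {0..t}"
      by (rule integrable_continuous_interval) (use cv t T in \<open>auto intro!: continuous_intros intro: continuous_on_subset\<close>)
    have split: "?I 0 t = ?I 0 T + ?I T t"
      using Henstock_Kurzweil_Integration.integral_combine[OF _ _ int, of T] T t by simp
    have "\<bar>?I T t\<bar> \<le> (e/2) * (exp t - exp T)"
      using integral_exp2_bound[of T t v "e/2"] T t continuous_on_subset[OF cv, of "{T..t}"] by auto
    moreover have "(e/2) * (exp t - exp T) \<le> (e/2) * exp t" using e by simp
    moreover have "\<bar>w + ?I 0 t\<bar> \<le> K + \<bar>?I T t\<bar>"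
      unfolding split K_def
      using abs_triangle_ineq[of w "?I 0 T + ?I T t"] abs_triangle_ineq[of "?I 0 T" "?I T t"] by linarith
    ultimately have "\<bar>w + ?I 0 t\<bar> \<le> K + (e/2) * exp t" by linarith
    hence "exp (- t) * \<bar>w + ?I 0 t\<bar> \<le> exp (- t) * (K + (e/2) * exp t)"
      by (simp add: mult_left_mono)
    also have "\<dots> = K * exp (- t) + e/2" by (simp add: algebra_simps flip: exp_add)
    also have "\<dots> \<le> e" using T'[of t] t by linarith
    finally show ?thesis by (simp add: damped_integral_def abs_mult flip: mult.assoc exp_add)
  qed
  thus "\<exists>T. \<forall>t\<ge>T. \<bar>exp t * damped_integral w v t\<bar> \<le> e" by blast
qed

text \<open>With W' = -2 W + v, the Navier condition W'(0) = (N-2) W(0) becomes v(0) = N W(0).\<close>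

definition lin_inv_init :: "nat \<Rightarrow> bc \<Rightarrow> (real \<Rightarrow> real) \<Rightarrow> real" where
  "lin_inv_init N b h = (case b of Dir \<Rightarrow> 0 | Nav \<Rightarrow> tail_integral (real N - 2) h 0 / real N)"

definition lin_inv :: "nat \<Rightarrow> bc \<Rightarrow> (real \<Rightarrow> real) \<Rightarrow> real \<Rightarrow> real" where
  "lin_inv N b h t = (if t < 0 then 0
     else damped_integral (lin_inv_init N b h) (tail_integral (real N - 2) h) t)"

lemma abs_lin_inv_init_le:
  assumes "N \<ge> 2" and "decay_le (tail_integral (real N - 2) h) M"
  shows "\<bar>lin_inv_init N b h\<bar> \<le> M"
proof (cases b)
  case Dir thus ?thesis using decay_le_nonneg[OF assms(2)] by (simp add: lin_inv_init_def)
next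
  case Nav
  have "\<bar>tail_integral (real N - 2) h 0\<bar> / real N \<le> \<bar>tail_integral (real N - 2) h 0\<bar> / 1"
    by (rule divide_left_mono) (use assms(1) in auto)
  moreover have "\<bar>tail_integral (real N - 2) h 0\<bar> \<le> M" using decay_leD[OF assms(2), of 0] by simp
  ultimately show ?thesis using Nav by (simp add: lin_inv_init_def)
qed

lemma has_deriv_Ici_lin_inv:
  fixes N :: nat and h :: "real \<Rightarrow> real"
  defines "v \<equiv> tail_integral (real N - 2) h"
  assumes N: "N \<ge> 2" and hY: "h \<in> Ysp" and hb: "decay_le h M"
  shows "has_deriv_Ici (lin_inv N b h) (\<lambda>t. -2 * lin_inv N b h t + v t)"
    "has_deriv_Ici (\<lambda>t. -2 * lin_inv N b h t + v t) (\<lambda>t. 4 * lin_inv N b h t + (real N - 4) * v t - h t)"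
proof -
  define W where "W = damped_integral (lin_inv_init N b h) v"
  have SW: "\<And>t. t \<ge> 0 \<Longrightarrow> lin_inv N b h t = W t" by (simp add: lin_inv_def W_def v_def)
  have hv: "has_deriv_Ici v (\<lambda>t. (real N - 2) * v t - h t)"
    unfolding v_def by (rule has_deriv_Ici_tail_integral[OF _ YspD(2)[OF hY] hb]) (use N in simp)
  have hW: "has_deriv_Ici W (\<lambda>t. -2 * W t + v t)"
    unfolding W_def by (rule has_deriv_Ici_damped_integral[OF has_deriv_Ici_continuous_on[OF hv]])
  thus "has_deriv_Ici (lin_inv N b h) (\<lambda>t. -2 * lin_inv N b h t + v t)"
    by (rule has_deriv_Ici_cong) (simp_all add: SW)
  have "has_deriv_Ici (\<lambda>t. -2 * W t + v t) (\<lambda>t. -2 * (-2 * W t + v t) + ((real N - 2) * v t - h t))"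
    unfolding has_deriv_Ici_def
  proof (intro allI impI)
    fix t :: real assume t: "t \<ge> 0"
    have dW: "(W has_real_derivative -2 * W t + v t) (at t within {0..})"
      using hW t unfolding has_deriv_Ici_def by blast
    have dv: "(v has_real_derivative (real N - 2) * v t - h t) (at t within {0..})"
      using hv t unfolding has_deriv_Ici_def by blast
    show "((\<lambda>t. -2 * W t + v t) has_real_derivative -2 * (-2 * W t + v t) + ((real N - 2) * v t - h t))
        (at t within {0..})" by (intro DERIV_add DERIV_cmult dW dv)
  qed
  thus "has_deriv_Ici (\<lambda>t. -2 * lin_inv N b h t + v t) (\<lambda>t. 4 * lin_inv N b h t + (real N - 4) * v t - h t)"
    by (rule has_deriv_Ici_cong) (simp_all add: SW algebra_simps)
qed

lemma lin_inv_in_Xsp: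
  fixes N :: nat and h :: "real \<Rightarrow> real"
  defines "v \<equiv> tail_integral (real N - 2) h"
  assumes N: "N \<ge> 2" and hY: "h \<in> Ysp" and hb: "decay_le h M"
  shows "lin_inv N b h \<in> Xsp N b" "decay_le (lin_inv N b h) M"
    "\<And>t. t \<ge> 0 \<Longrightarrow> d1 (lin_inv N b h) t = -2 * lin_inv N b h t + v t"
    "\<And>t. t \<ge> 0 \<Longrightarrow> d2 (lin_inv N b h) t = 4 * lin_inv N b h t + (real N - 4) * v t - h t"
proof -
  let ?S = "lin_inv N b h" and ?w = "lin_inv_init N b h"
  note hp = YspD[OF hY] and D = has_deriv_Ici_lin_inv[OF N hY hb, where b=b, folded v_def]
  have c: "real N - 2 \<ge> 0" and N0: "real N \<noteq> 0" using N by simp_all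
  have v: "continuous_on {0..} v" "decay_le v M" "((\<lambda>t. exp t * v t) \<longlongrightarrow> 0) at_top"
    using has_deriv_Ici_continuous_on[OF has_deriv_Ici_tail_integral[OF c hp(2) hb]]
      tail_integral_decay[OF c hp(2) hb hp(3)] by (simp_all add: v_def)
  have w: "\<bar>?w\<bar> \<le> M" using abs_lin_inv_init_le[OF N] v(2) by (simp add: v_def)
  have SW: "\<And>t. t \<ge> 0 \<Longrightarrow> ?S t = damped_integral ?w v t" by (simp add: lin_inv_def v_def)
  have S0: "?S 0 = ?w" by (simp add: SW damped_integral_def)
  have bc: "case b of Dir \<Rightarrow> ?S 0 = 0 | Nav \<Rightarrow> (-2 * ?S 0 + v 0) - (real N - 2) * ?S 0 = 0"
    by (cases b) (use S0 N0 in \<open>simp_all add: lin_inv_init_def v_def field_simps\<close>)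
  have lS: "((\<lambda>t. exp t * ?S t) \<longlongrightarrow> 0) at_top"
    using damped_integral_tendsto[OF v(1,3)] by (rule Lim_transform_eventually)
      (auto intro!: eventually_at_top_linorderI[of 0] simp: SW)
  have lim: "((\<lambda>t. exp t * (p * ?S t + q * v t + r * h t)) \<longlongrightarrow> 0) at_top" for p q r
  proof -
    have "((\<lambda>t. p * (exp t * ?S t) + q * (exp t * v t) + r * (exp t * h t)) \<longlongrightarrow> p * 0 + q * 0 + r * 0) at_top"
      by (intro tendsto_intros lS v(3) hp(3))
    thus ?thesis by (simp add: algebra_simps)
  qed
  have c2: "continuous_on {0..} (\<lambda>t. 4 * ?S t + (real N - 4) * v t - h t)"
    using has_deriv_Ici_continuous_on[OF D(1)] v(1) hp(2) by (auto intro!: continuous_intros)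
  have l1: "((\<lambda>t. exp t * (-2 * ?S t + v t)) \<longlongrightarrow> 0) at_top" using lim[of "-2" 1 0] by simp
  have l2: "((\<lambda>t. exp t * (4 * ?S t + (real N - 4) * v t - h t)) \<longlongrightarrow> 0) at_top"
    using lim[of 4 "real N - 4" "-1"] by simp
  have S_neg: "\<And>t. t < 0 \<Longrightarrow> ?S t = 0" by (simp add: lin_inv_def)
  show "?S \<in> Xsp N b" "\<And>t. t \<ge> 0 \<Longrightarrow> d1 ?S t = -2 * ?S t + v t"
    "\<And>t. t \<ge> 0 \<Longrightarrow> d2 ?S t = 4 * ?S t + (real N - 4) * v t - h t"
    using XspI[OF S_neg D c2 bc lS l1 l2] by blast+
  show "decay_le ?S M" using damped_integral_bound[OF v(1,2) w] by (intro decay_leI) (simp add: SW)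
qed

lemma lin_inv:
  fixes h :: "real \<Rightarrow> real"
  assumes N: "N \<ge> 2" and hY: "h \<in> Ysp" and hb: "decay_le h M"
  shows "lin_inv N b h \<in> Xsp N b" "lin_op N (lin_inv N b h) = h" "decay_le (lin_inv N b h) M"
    "decay_le (d1 (lin_inv N b h)) (3 * M)" "decay_le (d2 (lin_inv N b h)) ((\<bar>real N - 4\<bar> + 5) * M)"
proof -
  let ?S = "lin_inv N b h" and ?v = "tail_integral (real N - 2) h"
  note S = lin_inv_in_Xsp[OF N hY hb, where b=b] and hp = YspD[OF hY]
  have v: "decay_le ?v M" using tail_integral_decay[OF _ hp(2) hb hp(3)] N by simp
  show "?S \<in> Xsp N b" "decay_le ?S M" by (fact S(1), fact S(2))
  show "lin_op N ?S = h"
  proof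
    fix t :: real
    show "lin_op N ?S t = h t"
      using hp(1)[of t] by (cases "t < 0") (auto simp: lin_op_def S(3,4) algebra_simps)
  qed
  have "decay_le (\<lambda>t. -2 * ?S t + ?v t) (\<bar>-2\<bar> * M + M)"
    by (intro decay_le_add decay_le_cmult S(2) v)
  thus "decay_le (d1 ?S) (3 * M)" by (rule decay_le_cong[OF decay_le_mono]) (auto simp: S(3))
  have "decay_le (\<lambda>t. 4 * ?S t + (real N - 4) * ?v t + (-1) * h t)
      (\<bar>4\<bar> * M + \<bar>real N - 4\<bar> * M + \<bar>-1\<bar> * M)"
    by (intro decay_le_add decay_le_cmult S(2) v hb)
  thus "decay_le (d2 ?S) ((\<bar>real N - 4\<bar> + 5) * M)"
    by (rule decay_le_cong[OF decay_le_mono]) (auto simp: S(4) algebra_simps)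
qed

lemma lin_op_injective:
  assumes N: "N \<ge> 2" and z: "z \<in> Xsp N b" and L: "\<And>t. t \<ge> 0 \<Longrightarrow> lin_op N z t = 0"
  shows "z = (\<lambda>t. 0)"
proof -
  define a where "a = real N - 2"
  have a0: "a \<ge> 0" using N by (simp add: a_def)
  note p = XspD[OF z] and hz = Xsp_has_deriv[OF z]
  define v where "v t = d1 z t + 2 * z t" for t
  have dv: "has_deriv_Ici v (\<lambda>t. d2 z t + 2 * d1 z t)"
    using hz unfolding v_def[abs_def] has_deriv_Ici_def by (auto intro!: derivative_eq_intros)
  have "a * v t = d2 z t + 2 * d1 z t" if "t \<ge> 0" for t
    using L[OF that] that by (simp add: lin_op_def v_def a_def algebra_simps)
  hence hv: "has_deriv_Ici v (\<lambda>t. a * v t)" by (intro has_deriv_Ici_cong[OF dv]) auto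
  have vlim: "((\<lambda>t. exp t * v t) \<longlongrightarrow> 0) at_top"
  proof -
    have "((\<lambda>t. exp t * d1 z t + 2 * (exp t * z t)) \<longlongrightarrow> 0 + 2 * 0) at_top"
      by (intro tendsto_intros p)
    thus ?thesis by (simp add: v_def algebra_simps)
  qed
  have v0: "v 0 = 0" by (rule has_deriv_Ici_linear_ode_decay[OF hv _ vlim]) (use a0 in simp)
  note vt = has_deriv_Ici_linear_ode[OF hv]
  have dz: "d1 z t = -2 * z t" if "t \<ge> 0" for t
  proof -
    have "v t = 0" using vt[OF that] v0 by simp
    thus ?thesis unfolding v_def by linarith
  qed
  have "has_deriv_Ici z (\<lambda>t. -2 * z t)" by (rule has_deriv_Ici_cong[OF hz(1)]) (auto simp: dz)
  note zt = has_deriv_Ici_linear_ode[OF this]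
  have z0: "z 0 = 0"
  proof (cases b)
    case Dir thus ?thesis using p(2) by (simp add: bc_holds_def)
  next
    case Nav
    hence "d1 z 0 - (real N - 2) * z 0 = 0" using p(2) by (simp add: bc_holds_def)
    hence "real N * z 0 = 0" using dz[of 0] by (simp add: algebra_simps)
    thus ?thesis using N by simp
  qed
  show ?thesis
  proof
    fix t :: real
    show "z t = 0" using p(1)[of t] zt[of t] z0 by (cases "t < 0") auto
  qed
qed

lemma lin_inv_lin_op:
  assumes N: "N \<ge> 2" and z: "z \<in> Xsp N b"
  shows "z = lin_inv N b (lin_op N z)"
proof -
  have hY: "lin_op N z \<in> Ysp" by (rule lin_op_in_Ysp[OF z])
  note S = lin_inv[OF N hY decay_le_Ynorm_Ysp[OF hY], where b=b]
  have "(\<lambda>t. z t - lin_inv N b (lin_op N z) t) = (\<lambda>t. 0)"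
    by (rule lin_op_injective[OF N Xsp_diff(1)[OF z S(1)]]) (simp add: Xsp_diff(2)[OF z S(1)] S(2))
  thus ?thesis by (auto simp: fun_eq_iff)
qed

lemma decay_le_of_lin_op:
  assumes N: "N \<ge> 2" and z: "z \<in> Xsp N b" and hb: "decay_le (lin_op N z) M"
  shows "decay_le z M" "decay_le (d1 z) (3 * M)" "decay_le (d2 z) ((\<bar>real N - 4\<bar> + 5) * M)"
  using lin_inv(3-5)[OF N lin_op_in_Ysp[OF z] hb, where b=b] lin_inv_lin_op[OF N z, symmetric] by simp_all

lemma Xnorm_le_lin_op:
  assumes N: "N \<ge> 2" and z: "z \<in> Xsp N b" and hb: "decay_le (lin_op N z) M"
  shows "Xnorm z \<le> (9 + \<bar>real N - 4\<bar>) * M"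
  using Xnorm_le[OF decay_le_of_lin_op[OF N z hb]] by (simp add: algebra_simps)

lemma decay_le_lin_inv_diff:
  assumes N: "N \<ge> 2" and h1: "h1 \<in> Ysp" and h2: "h2 \<in> Ysp" and d: "decay_le (\<lambda>t. h1 t - h2 t) D"
  shows "decay_le (\<lambda>t. lin_inv N b h1 t - lin_inv N b h2 t) D"
proof -
  note S1 = lin_inv[OF N h1 decay_le_Ynorm_Ysp[OF h1], where b=b]
    and S2 = lin_inv[OF N h2 decay_le_Ynorm_Ysp[OF h2], where b=b]
  have "decay_le (lin_op N (\<lambda>t. lin_inv N b h1 t - lin_inv N b h2 t)) D"
    using d by (simp add: Xsp_diff(2)[OF S1(1) S2(1)] S1(2) S2(2))
  thus ?thesis by (rule decay_le_of_lin_op(1)[OF N Xsp_diff(1)[OF S1(1) S2(1)]])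
qed

section \<open>A contraction principle for L z = \<Phi> z\<close>

text \<open>A function z vanishing on t < 0 with decay_le z R corresponds to the bounded continuous
  function e^t z(t), extended constantly to t < 0, in the closed R-ball; Banach's fixed point theorem
  is applied in that ball.\<close>

definition weight :: "(real \<Rightarrow> real) \<Rightarrow> real \<Rightarrow>\<^sub>C real" where
  "weight s = Bcontfun (\<lambda>t. exp (max t 0) * s (max t 0))"

definition unweight :: "(real \<Rightarrow>\<^sub>C real) \<Rightarrow> real \<Rightarrow> real" where
  "unweight u t = (if t < 0 then 0 else exp (- t) * apply_bcontfun u t)"

lemma apply_weight:
  fixes s :: "real \<Rightarrow> real"
  assumes c: "continuous_on {0..} s" and b: "decay_le s R"
  shows "apply_bcontfun (weight s) = (\<lambda>t. exp (max t 0) * s (max t 0))"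
proof -
  have "continuous_on UNIV (\<lambda>t. exp (max t 0) * s (max t 0))"
  proof -
    have "continuous_on UNIV (\<lambda>t. max t (0::real))" by (intro continuous_intros)
    moreover have "continuous_on {0..} (\<lambda>x. exp x * s x)" using c by (intro continuous_intros)
    ultimately show ?thesis
      by (intro continuous_on_compose2[where t="{0..}" and g="\<lambda>x. exp x * s x" and f="\<lambda>t. max t 0", simplified]) auto
  qed
  moreover have "\<bar>exp (max t 0) * s (max t 0)\<bar> \<le> R" for t
    using b unfolding decay_le_def by (simp add: abs_mult)
  ultimately have "(\<lambda>t. exp (max t 0) * s (max t 0)) \<in> bcontfun"
    unfolding bcontfun_def by (auto simp: bounded_iff)
  thus ?thesis by (simp add: weight_def Bcontfun_inverse)
qed

lemma norm_weight_le:
  assumes "continuous_on {0..} s" and "decay_le s R"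
  shows "norm (weight s) \<le> R"
  using assms(2) by (intro norm_bound) (auto simp: apply_weight[OF assms] decay_le_def abs_mult)

lemma dist_weight_le:
  assumes "continuous_on {0..} s1" "decay_le s1 R1" "continuous_on {0..} s2" "decay_le s2 R2"
    and "decay_le (\<lambda>t. s1 t - s2 t) D"
  shows "dist (weight s1) (weight s2) \<le> D"
proof (rule dist_bound)
  fix x :: real
  have "exp (max x 0) * \<bar>s1 (max x 0) - s2 (max x 0)\<bar> \<le> D" using assms(5) unfolding decay_le_def by simp
  thus "dist (apply_bcontfun (weight s1) x) (apply_bcontfun (weight s2) x) \<le> D"
    by (simp add: apply_weight[OF assms(1,2)] apply_weight[OF assms(3,4)] dist_real_def abs_mult
        flip: right_diff_distrib)
qed

lemma unweight_weight:
  assumes "\<And>t. t < 0 \<Longrightarrow> s t = 0" "continuous_on {0..} s" "decay_le s R"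
  shows "unweight (weight s) = s"
  using assms(1) by (auto simp: fun_eq_iff unweight_def apply_weight[OF assms(2,3)] exp_minus field_simps)

lemma unweight:
  "\<And>t. t < 0 \<Longrightarrow> unweight u t = 0" "continuous_on {0..} (unweight u)" "decay_le (unweight u) (norm u)"
proof -
  show "\<And>t. t < 0 \<Longrightarrow> unweight u t = 0" by (simp add: unweight_def)
  show "continuous_on {0..} (unweight u)"
    by (rule continuous_on_eq[where f="\<lambda>t. exp (- t) * apply_bcontfun u t"])
       (auto intro!: continuous_intros simp: unweight_def)
  show "decay_le (unweight u) (norm u)"
    unfolding decay_le_def unweight_def using norm_bounded[of u]
    by (auto simp: abs_mult exp_minus field_simps)
qed

lemma decay_le_unweight_diff: "decay_le (\<lambda>t. unweight u1 t - unweight u2 t) (dist u1 u2)"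
  unfolding decay_le_def
proof (intro allI impI)
  fix t :: real assume t: "t \<ge> 0"
  have "exp t * \<bar>exp (- t) * apply_bcontfun u1 t - exp (- t) * apply_bcontfun u2 t\<bar>
      = dist (apply_bcontfun u1 t) (apply_bcontfun u2 t)"
    by (simp add: dist_real_def abs_mult exp_minus field_simps flip: right_diff_distrib)
  also have "\<dots> \<le> dist u1 u2" by (rule dist_bounded)
  finally show "exp t * \<bar>unweight u1 t - unweight u2 t\<bar> \<le> dist u1 u2" using t by (simp add: unweight_def)
qed

lemma lin_op_fixpoint:
  fixes \<Phi> :: "(real \<Rightarrow> real) \<Rightarrow> real \<Rightarrow> real"
  assumes N: "N \<ge> 2" and R: "R > 0" and k: "0 \<le> k" "k < 1"
    and maps: "\<And>z. (\<forall>t<0. z t = 0) \<Longrightarrow> continuous_on {0..} z \<Longrightarrow> decay_le z R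
       \<Longrightarrow> \<Phi> z \<in> Ysp \<and> decay_le (\<Phi> z) R"
    and contracts: "\<And>z1 z2 D. (\<forall>t<0. z1 t = 0) \<Longrightarrow> continuous_on {0..} z1 \<Longrightarrow> decay_le z1 R \<Longrightarrow>
       (\<forall>t<0. z2 t = 0) \<Longrightarrow> continuous_on {0..} z2 \<Longrightarrow> decay_le z2 R \<Longrightarrow>
       decay_le (\<lambda>t. z1 t - z2 t) D \<Longrightarrow> decay_le (\<lambda>t. \<Phi> z1 t - \<Phi> z2 t) (k * D)"
  shows "\<exists>z \<in> Xsp N b. decay_le z R \<and> lin_op N z = \<Phi> z"
proof -
  define S where "S = cball (0 :: real \<Rightarrow>\<^sub>C real) R"
  define sol where "sol u = lin_inv N b (\<Phi> (unweight u))" for u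
  have inS: "u \<in> S \<longleftrightarrow> norm u \<le> R" for u by (simp add: S_def dist_norm)
  have uS: "decay_le (unweight u) R" if "u \<in> S" for u
    using unweight(3)[of u] that unfolding inS decay_le_def by (meson order.trans)
  have \<Phi>S: "\<Phi> (unweight u) \<in> Ysp" "decay_le (\<Phi> (unweight u)) R" if "u \<in> S" for u
    using maps[OF _ unweight(2) uS[OF that]] unweight(1) by blast+
  have sol: "sol u \<in> Xsp N b" "lin_op N (sol u) = \<Phi> (unweight u)" "decay_le (sol u) R"
    "continuous_on {0..} (sol u)" if "u \<in> S" for u
    using lin_inv(1-3)[OF N \<Phi>S[OF that], where b=b] XspD(7)[OF lin_inv(1)[OF N \<Phi>S[OF that]]]
    by (simp_all add: sol_def)
  have TS: "(\<lambda>u. weight (sol u)) ` S \<subseteq> S"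
    using norm_weight_le[OF sol(4) sol(3)] by (auto simp: inS)
  have lip: "dist (weight (sol u1)) (weight (sol u2)) \<le> k * dist u1 u2" if u1: "u1 \<in> S" and u2: "u2 \<in> S" for u1 u2
  proof (rule dist_weight_le[OF sol(4,3)[OF u1] sol(4,3)[OF u2]])
    show "decay_le (\<lambda>t. sol u1 t - sol u2 t) (k * dist u1 u2)"
      unfolding sol_def
      by (rule decay_le_lin_inv_diff[OF N \<Phi>S(1)[OF u1] \<Phi>S(1)[OF u2]],
          rule contracts[OF _ unweight(2) uS[OF u1] _ unweight(2) uS[OF u2] decay_le_unweight_diff])
         (auto simp: unweight(1))
  qed
  have "\<exists>!u\<in>S. weight (sol u) = u"
    by (rule Banach_fix[OF _ _ k TS lip]) (use R in \<open>auto simp: S_def complete_eq_closed\<close>)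
  then obtain u where u: "u \<in> S" "weight (sol u) = u" by auto
  have "unweight u = sol u"
    using unweight_weight[OF XspD(1)[OF sol(1)[OF u(1)]] sol(4,3)[OF u(1)]] u(2) by simp
  thus ?thesis using sol[OF u(1)] by (intro bexI[of _ "sol u"]) auto
qed

section \<open>The reduced equations\<close>

text \<open>With the forcing term f(t) = e^{(N-4)t} times the integral of g over [0, e^{-t}], the equation
  F(z,\<lambda>) = 0 reads L z = (N-1)/2 z^2 + \<lambda> f, and F_z(z,\<lambda>) w = f reads L w = (N-1) z w + f.\<close>

definition solves_F :: "nat \<Rightarrow> (real \<Rightarrow> real) \<Rightarrow> real \<Rightarrow> (real \<Rightarrow> real) \<Rightarrow> bool" where
  "solves_F N f lam z \<longleftrightarrow> (\<forall>t\<ge>0. lin_op N z t = (real N - 1) / 2 * (z t)\<^sup>2 + lam * f t)"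

definition solves_Fz :: "nat \<Rightarrow> (real \<Rightarrow> real) \<Rightarrow> (real \<Rightarrow> real) \<Rightarrow> (real \<Rightarrow> real) \<Rightarrow> bool" where
  "solves_Fz N z f w \<longleftrightarrow> (\<forall>t\<ge>0. lin_op N w t = (real N - 1) * z t * w t + f t)"

lemma solves_FD: "solves_F N f lam z \<Longrightarrow> t \<ge> 0 \<Longrightarrow> lin_op N z t = (real N - 1) / 2 * (z t)\<^sup>2 + lam * f t"
  by (simp add: solves_F_def)

lemma solves_FzD: "solves_Fz N z f w \<Longrightarrow> t \<ge> 0 \<Longrightarrow> lin_op N w t = (real N - 1) * z t * w t + f t"
  by (simp add: solves_Fz_def)

lemma Ysp_cmult:
  assumes "f \<in> Ysp"
  shows "(\<lambda>t. c * f t) \<in> Ysp"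
proof -
  note fp = YspD[OF assms]
  have "((\<lambda>t. c * (exp t * f t)) \<longlongrightarrow> c * 0) at_top" by (intro tendsto_intros fp(3))
  thus ?thesis using fp(1,2) by (auto simp: Ysp_def algebra_simps intro!: continuous_intros)
qed

lemma Ysp_mult_add:
  assumes cz: "continuous_on {0..} z" and cw: "continuous_on {0..} w"
    and z: "decay_le z A" and w: "decay_le w B" and h: "h \<in> Ysp"
  shows "(\<lambda>t. if t < 0 then 0 else c * z t * w t + h t) \<in> Ysp"
proof -
  note hp = YspD[OF h]
  have "continuous_on {0..} (\<lambda>t. if t < 0 then 0 else c * z t * w t + h t)"
    by (rule continuous_on_eq[where f="\<lambda>t. c * z t * w t + h t"]) (use cz cw hp in \<open>auto intro!: continuous_intros\<close>)
  moreover have "((\<lambda>t. exp t * (if t < 0 then 0 else c * z t * w t + h t)) \<longlongrightarrow> 0) at_top"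
  proof (rule Lim_null_comparison)
    have "\<bar>exp t * (c * z t * w t + h t)\<bar> \<le> \<bar>c\<bar> * (A * B * exp (- t)) + \<bar>exp t * h t\<bar>" if t: "t \<ge> 0" for t
    proof -
      have "\<bar>exp t * (c * z t * w t + h t)\<bar> \<le> \<bar>c\<bar> * (exp t * \<bar>z t * w t\<bar>) + \<bar>exp t * h t\<bar>"
        by (simp add: abs_mult distrib_left mult.left_commute mult.assoc order.trans[OF abs_triangle_ineq])
      also have "\<dots> \<le> \<bar>c\<bar> * (A * B * exp (- t)) + \<bar>exp t * h t\<bar>"
        using decay_le_mult_exp[OF z w t] by (simp add: mult_left_mono)
      finally show ?thesis .
    qed
    thus "\<forall>\<^sub>F t in at_top. norm (exp t * (if t < 0 then 0 else c * z t * w t + h t))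
        \<le> \<bar>c\<bar> * (A * B * exp (- t)) + \<bar>exp t * h t\<bar>"
      by (auto intro!: eventually_at_top_linorderI[of 0])
    have "((\<lambda>t. \<bar>c\<bar> * (A * B * exp (- t)) + \<bar>exp t * h t\<bar>) \<longlongrightarrow> \<bar>c\<bar> * (A * B * 0) + \<bar>0\<bar>) at_top"
      by (intro tendsto_intros hp(3) filterlim_compose[OF exp_at_bot filterlim_uminus_at_bot_at_top])
    thus "((\<lambda>t. \<bar>c\<bar> * (A * B * exp (- t)) + \<bar>exp t * h t\<bar>) \<longlongrightarrow> 0) at_top" by simp
  qed
  ultimately show ?thesis by (auto simp: Ysp_def)
qed

text \<open>The a priori bound turns a small multiplicative perturbation of L into a contraction of
  the norm, which forces w = 0.\<close>

lemma lin_op_perturbed_injective: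
  assumes N: "N \<ge> 2" and q: "decay_le q A" and KA: "(real N - 1) * A < 1"
    and w: "w \<in> Xsp N b" and L: "\<And>t. t \<ge> 0 \<Longrightarrow> lin_op N w t = (real N - 1) * q t * w t"
  shows "w = (\<lambda>t. 0)"
proof -
  define D where "D = Ynorm w"
  have wD: "decay_le w D" unfolding D_def by (rule decay_le_Xsp[OF w])
  have K: "real N - 1 \<ge> 0" using N by simp
  have "decay_le (\<lambda>t. (real N - 1) * (q t * w t)) (\<bar>real N - 1\<bar> * (A * D))"
    by (rule decay_le_cmult[OF decay_le_mult[OF q wD]])
  hence "decay_le (lin_op N w) ((real N - 1) * A * D)"
    by (rule decay_le_cong[OF decay_le_mono]) (use K L in \<open>auto simp: algebra_simps\<close>)
  from decay_le_of_lin_op(1)[OF N w this] have "D \<le> (real N - 1) * A * D"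
    unfolding D_def by (rule Ynorm_le)
  hence "D = 0" using KA decay_le_nonneg[OF wD]
    by (metis mult_le_cancel_right1 not_le order_antisym mult.commute)
  show ?thesis
  proof
    fix t :: real
    show "w t = 0" using decay_le_zeroD[of w t] wD \<open>D = 0\<close> XspD(1)[OF w, of t] by (cases "t < 0") auto
  qed
qed

lemma solves_Fz_exists:
  assumes N: "N \<ge> 2" and z: "z \<in> Xsp N b" and zr: "decay_le z \<rho>" and K\<rho>: "(real N - 1) * \<rho> \<le> 1/4"
    and h: "h \<in> Ysp" and hb: "decay_le h H"
  shows "\<exists>w\<in>Xsp N b. decay_le w (2 * H + 1) \<and> solves_Fz N z h w"
proof -
  define K where "K = real N - 1"
  have K0: "K \<ge> 0" using N by (simp add: K_def)
  have r0: "\<rho> \<ge> 0" using decay_le_nonneg[OF zr] .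
  have H0: "H \<ge> 0" using decay_le_nonneg[OF hb] .
  have "\<exists>w\<in>Xsp N b. decay_le w (2 * H + 1) \<and>
      lin_op N w = (\<lambda>t. if t < 0 then 0 else K * z t * w t + h t)"
  proof (rule lin_op_fixpoint[OF N, where \<Phi>="\<lambda>w t. if t < 0 then 0 else K * z t * w t + h t" and k="K * \<rho>"])
    show "0 < 2 * H + 1" "0 \<le> K * \<rho>" "K * \<rho> < 1" using H0 K0 r0 K\<rho> by (simp_all add: K_def)
  next
    fix w :: "real \<Rightarrow> real"
    assume "\<forall>t<0. w t = 0" and cw: "continuous_on {0..} w" and wb: "decay_le w (2 * H + 1)"
    have "decay_le (\<lambda>t. K * (z t * w t) + h t) (\<bar>K\<bar> * (\<rho> * (2 * H + 1)) + H)"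
      by (rule decay_le_add[OF decay_le_cmult[OF decay_le_mult[OF zr wb]] hb])
    moreover have "\<bar>K\<bar> * (\<rho> * (2 * H + 1)) + H \<le> 2 * H + 1"
    proof -
      have "\<bar>K\<bar> * (\<rho> * (2 * H + 1)) = (K * \<rho>) * (2 * H + 1)" using K0 by simp
      also have "\<dots> \<le> (1/4) * (2 * H + 1)" using K\<rho> H0 by (intro mult_right_mono) (auto simp: K_def)
      also have "\<dots> = H / 2 + 1 / 4" by simp
      finally show ?thesis using H0 by linarith
    qed
    ultimately have "decay_le (\<lambda>t. K * (z t * w t) + h t) (2 * H + 1)" by (rule decay_le_mono)
    thus "(\<lambda>t. if t < 0 then 0 else K * z t * w t + h t) \<in> Ysp \<and>
          decay_le (\<lambda>t. if t < 0 then 0 else K * z t * w t + h t) (2 * H + 1)"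
      using Ysp_mult_add[OF XspD(7)[OF z] cw zr wb h]
      by (auto elim: decay_le_cong simp: mult.assoc)
  next
    fix w1 w2 :: "real \<Rightarrow> real" and D :: real
    assume "decay_le (\<lambda>t. w1 t - w2 t) D"
    from decay_le_cmult[OF decay_le_mult[OF zr this], of K]
    show "decay_le (\<lambda>t. (if t < 0 then 0 else K * z t * w1 t + h t) - (if t < 0 then 0 else K * z t * w2 t + h t)) (K * \<rho> * D)"
      by (rule decay_le_cong[OF decay_le_mono]) (use K0 in \<open>auto simp: algebra_simps\<close>)
  qed
  thus ?thesis by (auto simp: solves_Fz_def K_def)
qed

lemma solves_F_exists:
  assumes N: "N \<ge> 2" and fY: "f \<in> Ysp" and fb: "decay_le f F0" and r: "\<rho> > 0"
    and K\<rho>: "(real N - 1) * \<rho> \<le> 1/4" and lam: "\<bar>lam\<bar> * F0 \<le> \<rho> / 2"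
  shows "\<exists>z\<in>Xsp N b. decay_le z \<rho> \<and> solves_F N f lam z"
proof -
  define K where "K = real N - 1"
  have K0: "K \<ge> 0" using N by (simp add: K_def)
  have fl: "(\<lambda>t. lam * f t) \<in> Ysp" by (rule Ysp_cmult[OF fY])
  have "\<exists>z\<in>Xsp N b. decay_le z \<rho> \<and>
      lin_op N z = (\<lambda>t. if t < 0 then 0 else K / 2 * (z t)\<^sup>2 + lam * f t)"
  proof (rule lin_op_fixpoint[OF N r, where \<Phi>="\<lambda>z t. if t < 0 then 0 else K / 2 * (z t)\<^sup>2 + lam * f t" and k="K * \<rho>"])
    show "0 \<le> K * \<rho>" "K * \<rho> < 1" using K0 r K\<rho> by (simp_all add: K_def)
  next
    fix z :: "real \<Rightarrow> real"
    assume "\<forall>t<0. z t = 0" and cz: "continuous_on {0..} z" and zb: "decay_le z \<rho>"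
    have "decay_le (\<lambda>t. K/2 * (z t * z t) + lam * f t) (\<bar>K/2\<bar> * (\<rho> * \<rho>) + \<bar>lam\<bar> * F0)"
      by (rule decay_le_add[OF decay_le_cmult[OF decay_le_mult[OF zb zb]] decay_le_cmult[OF fb]])
    moreover have "\<bar>K/2\<bar> * (\<rho> * \<rho>) + \<bar>lam\<bar> * F0 \<le> \<rho>"
    proof -
      have "\<bar>K/2\<bar> * (\<rho> * \<rho>) = (K * \<rho>) * \<rho> / 2" using K0 by simp
      also have "\<dots> \<le> (1/4) * \<rho> / 2"
        using K\<rho> r by (intro divide_right_mono mult_right_mono) (auto simp: K_def)
      finally show ?thesis using lam r by linarith
    qed
    ultimately have "decay_le (\<lambda>t. K/2 * (z t * z t) + lam * f t) \<rho>" by (rule decay_le_mono)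
    hence "decay_le (\<lambda>t. if t < 0 then 0 else K / 2 * (z t)\<^sup>2 + lam * f t) \<rho>"
      by (rule decay_le_cong) (simp add: power2_eq_square)
    moreover have "(\<lambda>t. if t < 0 then 0 else K / 2 * (z t)\<^sup>2 + lam * f t)
        = (\<lambda>t. if t < 0 then 0 else K / 2 * z t * z t + lam * f t)"
      by (rule ext) (simp add: power2_eq_square)
    ultimately show "(\<lambda>t. if t < 0 then 0 else K / 2 * (z t)\<^sup>2 + lam * f t) \<in> Ysp \<and>
          decay_le (\<lambda>t. if t < 0 then 0 else K / 2 * (z t)\<^sup>2 + lam * f t) \<rho>"
      using Ysp_mult_add[OF cz cz zb zb fl, of "K/2"] by simp
  next
    fix z1 z2 :: "real \<Rightarrow> real" and D :: real
    assume "decay_le z1 \<rho>" "decay_le z2 \<rho>" and d: "decay_le (\<lambda>t. z1 t - z2 t) D"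
    have s: "decay_le (\<lambda>t. z1 t + z2 t) (\<rho> + \<rho>)" by (rule decay_le_add) fact+
    from decay_le_cmult[OF decay_le_mult[OF s d], of "K/2"]
    have "decay_le (\<lambda>t. K / 2 * ((z1 t + z2 t) * (z1 t - z2 t))) (K * \<rho> * D)"
      using K0 by (simp add: algebra_simps)
    thus "decay_le (\<lambda>t. (if t < 0 then 0 else K / 2 * (z1 t)\<^sup>2 + lam * f t)
        - (if t < 0 then 0 else K / 2 * (z2 t)\<^sup>2 + lam * f t)) (K * \<rho> * D)"
      by (rule decay_le_cong) (simp add: power2_eq_square algebra_simps)
  qed
  thus ?thesis by (auto simp: solves_F_def K_def)
qed

lemma solves_F_unique:
  assumes N: "N \<ge> 2" and z: "z \<in> Xsp N b" "decay_le z A" and z': "z' \<in> Xsp N b" "decay_le z' B"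
    and KAB: "(real N - 1) * ((A + B) / 2) < 1"
    and L: "solves_F N f lam z" and L': "solves_F N f lam z'"
  shows "z = z'"
proof -
  have q: "decay_le (\<lambda>t. (1/2) * (z t + z' t)) (\<bar>1/2\<bar> * (A + B))"
    by (rule decay_le_cmult[OF decay_le_add[OF z(2) z'(2)]])
  have "(\<lambda>t. z t - z' t) = (\<lambda>t. 0)"
  proof (rule lin_op_perturbed_injective[OF N q _ Xsp_diff(1)[OF z(1) z'(1)]])
    show "(real N - 1) * (\<bar>1/2\<bar> * (A + B)) < 1" using KAB by simp
    fix t :: real assume t: "t \<ge> 0"
    show "lin_op N (\<lambda>t. z t - z' t) t = (real N - 1) * ((1/2) * (z t + z' t)) * (z t - z' t)"
      unfolding Xsp_diff(2)[OF z(1) z'(1)] solves_FD[OF L t] solves_FD[OF L' t]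
      by (simp add: power2_eq_square field_simps)
  qed
  thus ?thesis by (auto simp: fun_eq_iff)
qed

text \<open>The three estimates below all follow the same pattern: L applied to the difference is
  bounded by (N-1)\<rho> times its own weighted norm plus a small term, and (N-1)\<rho> \<le> 1/4 lets the
  first part be absorbed.\<close>

lemma solves_F_lipschitz:
  assumes N: "N \<ge> 2" and K\<rho>: "(real N - 1) * \<rho> \<le> 1/4" and fb: "decay_le f F0"
    and zm: "zm \<in> Xsp N b" "decay_le zm \<rho>" "solves_F N f m zm"
    and zl: "zl \<in> Xsp N b" "decay_le zl \<rho>" "solves_F N f l zl"
  shows "decay_le (\<lambda>t. zm t - zl t) (2 * \<bar>m - l\<bar> * F0)"
proof -
  define K where "K = real N - 1"
  have K0: "K \<ge> 0" using N by (simp add: K_def)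
  note dX = Xsp_diff[OF zm(1) zl(1)]
  define D where "D = Ynorm (\<lambda>t. zm t - zl t)"
  have dD: "decay_le (\<lambda>t. zm t - zl t) D" unfolding D_def by (rule decay_le_Xsp[OF dX(1)])
  have "decay_le (\<lambda>t. (K/2) * ((zm t + zl t) * (zm t - zl t)) + (m - l) * f t)
      (\<bar>K/2\<bar> * ((\<rho> + \<rho>) * D) + \<bar>m - l\<bar> * F0)"
    by (rule decay_le_add[OF decay_le_cmult[OF decay_le_mult[OF decay_le_add[OF zm(2) zl(2)] dD]] decay_le_cmult[OF fb]])
  hence "decay_le (lin_op N (\<lambda>t. zm t - zl t)) ((K * \<rho>) * D + \<bar>m - l\<bar> * F0)"
  proof (rule decay_le_cong[OF decay_le_mono])
    show "\<bar>K/2\<bar> * ((\<rho> + \<rho>) * D) + \<bar>m - l\<bar> * F0 \<le> (K * \<rho>) * D + \<bar>m - l\<bar> * F0"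
      using K0 by (simp add: algebra_simps)
    fix t :: real assume t: "t \<ge> 0"
    show "lin_op N (\<lambda>t. zm t - zl t) t = K / 2 * ((zm t + zl t) * (zm t - zl t)) + (m - l) * f t"
      unfolding dX(2) solves_FD[OF zm(3) t] solves_FD[OF zl(3) t]
      by (simp add: K_def power2_eq_square algebra_simps)
  qed
  from decay_le_of_lin_op(1)[OF N dX(1) this] have "D \<le> (K * \<rho>) * D + \<bar>m - l\<bar> * F0"
    unfolding D_def by (rule Ynorm_le)
  moreover have "(K * \<rho>) * D \<le> (1/4) * D"
    using K\<rho> decay_le_nonneg[OF dD] by (intro mult_right_mono) (auto simp: K_def)
  moreover have "\<bar>m - l\<bar> * F0 \<ge> 0" using decay_le_nonneg[OF fb] by simp
  ultimately have "D \<le> 2 * \<bar>m - l\<bar> * F0" by linarith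
  thus ?thesis by (rule decay_le_mono[OF dD])
qed

lemma solves_F_derivative_estimate:
  assumes N: "N \<ge> 2" and K\<rho>: "(real N - 1) * \<rho> \<le> 1/4" and fb: "decay_le f F0"
    and zm: "zm \<in> Xsp N b" "decay_le zm \<rho>" "solves_F N f m zm"
    and zl: "zl \<in> Xsp N b" "decay_le zl \<rho>" "solves_F N f l zl"
    and wl: "wl \<in> Xsp N b" "solves_Fz N zl f wl"
  shows "Xnorm (\<lambda>t. zm t - zl t - (m - l) * wl t)
     \<le> (9 + \<bar>real N - 4\<bar>) * (real N - 1) * (2 * F0)\<^sup>2 * (m - l)\<^sup>2"
proof -
  define K where "K = real N - 1"
  define D' where "D' = 2 * \<bar>m - l\<bar> * F0"
  have K0: "K \<ge> 0" using N by (simp add: K_def)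
  note dX = Xsp_diff[OF zm(1) zl(1)]
  have dD: "decay_le (\<lambda>t. zm t - zl t) D'" unfolding D'_def by (rule solves_F_lipschitz[OF N K\<rho> fb zm zl])
  note rX = Xsp_diff_scaled[OF dX(1) wl(1), of "m - l"]
  define E where "E = Ynorm (\<lambda>t. zm t - zl t - (m - l) * wl t)"
  have rE: "decay_le (\<lambda>t. zm t - zl t - (m - l) * wl t) E" unfolding E_def by (rule decay_le_Xsp[OF rX(1)])
  have "decay_le (\<lambda>t. K * (zl t * (zm t - zl t - (m - l) * wl t)) + (K/2) * ((zm t - zl t) * (zm t - zl t)))
      (\<bar>K\<bar> * (\<rho> * E) + \<bar>K/2\<bar> * (D' * D'))"
    by (rule decay_le_add[OF decay_le_cmult[OF decay_le_mult[OF zl(2) rE]] decay_le_cmult[OF decay_le_mult[OF dD dD]]])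
  hence LB: "decay_le (lin_op N (\<lambda>t. zm t - zl t - (m - l) * wl t)) ((K * \<rho>) * E + K/2 * D'\<^sup>2)"
  proof (rule decay_le_cong[OF decay_le_mono])
    show "\<bar>K\<bar> * (\<rho> * E) + \<bar>K/2\<bar> * (D' * D') \<le> (K * \<rho>) * E + K/2 * D'\<^sup>2"
      using K0 by (simp add: power2_eq_square algebra_simps)
    fix t :: real assume t: "t \<ge> 0"
    show "lin_op N (\<lambda>t. zm t - zl t - (m - l) * wl t) t =
        K * (zl t * (zm t - zl t - (m - l) * wl t)) + (K/2) * ((zm t - zl t) * (zm t - zl t))"
      unfolding rX(2) dX(2) solves_FD[OF zm(3) t] solves_FD[OF zl(3) t] solves_FzD[OF wl(2) t]
      by (simp add: K_def power2_eq_square field_simps)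
  qed
  have KE: "(K * \<rho>) * E \<le> (1/4) * E" using K\<rho> decay_le_nonneg[OF rE] by (intro mult_right_mono) (auto simp: K_def)
  from decay_le_of_lin_op(1)[OF N rX(1) LB] have "E \<le> (K * \<rho>) * E + K/2 * D'\<^sup>2"
    unfolding E_def by (rule Ynorm_le)
  moreover have "K/2 * D'\<^sup>2 = (1/2) * (K * D'\<^sup>2)" "K * D'\<^sup>2 \<ge> 0" using K0 by simp_all
  ultimately have "(K * \<rho>) * E + K/2 * D'\<^sup>2 \<le> K * D'\<^sup>2" using KE decay_le_nonneg[OF rE] by linarith
  hence "Xnorm (\<lambda>t. zm t - zl t - (m - l) * wl t) \<le> (9 + \<bar>real N - 4\<bar>) * (K * D'\<^sup>2)"
    using Xnorm_le_lin_op[OF N rX(1) LB] by (meson mult_left_mono abs_ge_zero add_nonneg_nonneg order.trans zero_le_numeral)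
  thus ?thesis by (simp add: K_def D'_def power_mult_distrib algebra_simps)
qed

lemma solves_Fz_lipschitz:
  assumes N: "N \<ge> 2" and K\<rho>: "(real N - 1) * \<rho> \<le> 1/4" and fb: "decay_le f F0"
    and zm: "zm \<in> Xsp N b" "decay_le zm \<rho>" "solves_F N f m zm"
    and zl: "zl \<in> Xsp N b" "decay_le zl \<rho>" "solves_F N f l zl"
    and wm: "wm \<in> Xsp N b" "decay_le wm R" "solves_Fz N zm f wm"
    and wl: "wl \<in> Xsp N b" "solves_Fz N zl f wl"
  shows "Xnorm (\<lambda>t. wm t - wl t) \<le> 2 * (9 + \<bar>real N - 4\<bar>) * (real N - 1) * (2 * F0) * R * \<bar>m - l\<bar>"
proof -
  define K where "K = real N - 1"
  define D' where "D' = 2 * \<bar>m - l\<bar> * F0"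
  have K0: "K \<ge> 0" using N by (simp add: K_def)
  have dD: "decay_le (\<lambda>t. zm t - zl t) D'" unfolding D'_def by (rule solves_F_lipschitz[OF N K\<rho> fb zm zl])
  note wX = Xsp_diff[OF wm(1) wl(1)]
  define E where "E = Ynorm (\<lambda>t. wm t - wl t)"
  have wE: "decay_le (\<lambda>t. wm t - wl t) E" unfolding E_def by (rule decay_le_Xsp[OF wX(1)])
  have "decay_le (\<lambda>t. K * (zl t * (wm t - wl t)) + K * ((zm t - zl t) * wm t)) (\<bar>K\<bar> * (\<rho> * E) + \<bar>K\<bar> * (D' * R))"
    by (rule decay_le_add[OF decay_le_cmult[OF decay_le_mult[OF zl(2) wE]] decay_le_cmult[OF decay_le_mult[OF dD wm(2)]]])
  hence LB: "decay_le (lin_op N (\<lambda>t. wm t - wl t)) ((K * \<rho>) * E + K * D' * R)"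
  proof (rule decay_le_cong[OF decay_le_mono])
    show "\<bar>K\<bar> * (\<rho> * E) + \<bar>K\<bar> * (D' * R) \<le> (K * \<rho>) * E + K * D' * R"
      using K0 by (simp add: algebra_simps)
    fix t :: real assume t: "t \<ge> 0"
    show "lin_op N (\<lambda>t. wm t - wl t) t = K * (zl t * (wm t - wl t)) + K * ((zm t - zl t) * wm t)"
      unfolding wX(2) solves_FzD[OF wm(3) t] solves_FzD[OF wl(2) t] by (simp add: K_def algebra_simps)
  qed
  have KE: "(K * \<rho>) * E \<le> (1/4) * E" using K\<rho> decay_le_nonneg[OF wE] by (intro mult_right_mono) (auto simp: K_def)
  from decay_le_of_lin_op(1)[OF N wX(1) LB] have "E \<le> (K * \<rho>) * E + K * D' * R"
    unfolding E_def by (rule Ynorm_le)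
  hence "(K * \<rho>) * E + K * D' * R \<le> 2 * (K * D' * R)" using KE decay_le_nonneg[OF wE] by linarith
  hence "Xnorm (\<lambda>t. wm t - wl t) \<le> (9 + \<bar>real N - 4\<bar>) * (2 * (K * D' * R))"
    using Xnorm_le_lin_op[OF N wX(1) LB] by (meson mult_left_mono abs_ge_zero add_nonneg_nonneg order.trans zero_le_numeral)
  thus ?thesis by (simp add: K_def D'_def algebra_simps)
qed

section \<open>The map F and its partial derivative\<close>

definition forcing :: "nat \<Rightarrow> (real \<Rightarrow> real) \<Rightarrow> real \<Rightarrow> real" where
  "forcing N g t = (if t < 0 then 0 else exp ((real N - 4) * t) * (LBINT s=0..exp (- t). g s))"

lemma forcing_in_Ysp:
  assumes g: "set_integrable lborel {0..1} g"
    and lim: "((\<lambda>t. exp ((real N - 3) * t) * (LBINT s=0..exp (- t). g s)) \<longlongrightarrow> 0) at_top"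
  shows "forcing N g \<in> Ysp"
proof -
  have gi: "g integrable_on {0..1}" using set_borel_integral_eq_integral(1)[OF g] .
  have G: "(LBINT s=0..exp (- t). g s) = integral {0..exp (- t)} g" if "t \<ge> 0" for t
  proof -
    have "set_integrable lborel {0..exp (- t)} g"
      by (rule set_integrable_subset[OF g]) (use that in auto)
    from interval_integral_eq_integral[OF _ this] show ?thesis by (simp add: zero_ereal_def)
  qed
  have cI: "continuous_on {0..1} (\<lambda>x. integral {0..x} g)" by (rule indefinite_integral_continuous_1[OF gi])
  have cG: "continuous_on {0..} (\<lambda>t. integral {0..exp (- t)} g)"
    by (rule continuous_on_compose2[OF cI, where f="\<lambda>t. exp (- t)"]) (auto intro!: continuous_intros)
  have c: "continuous_on {0..} (forcing N g)"
    by (rule continuous_on_eq[where f="\<lambda>t. exp ((real N - 4) * t) * integral {0..exp (- t)} g"])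
       (use cG in \<open>auto intro!: continuous_intros simp: forcing_def G\<close>)
  have "((\<lambda>t. exp t * forcing N g t) \<longlongrightarrow> 0) at_top"
    using lim by (rule Lim_transform_eventually)
      (auto intro!: eventually_at_top_linorderI[of 0] simp: forcing_def algebra_simps simp flip: exp_add)
  thus ?thesis using c by (auto simp: Ysp_def forcing_def)
qed

lemma Fmap_eq_lin_op:
  "t \<ge> 0 \<Longrightarrow> Fmap N g z lam t = lin_op N z t - (real N - 1) / 2 * (z t)\<^sup>2 - lam * forcing N g t"
  by (simp add: Fmap_def lin_op_def forcing_def)

lemma Fmap_eq_zero_iff: "Fmap N g z lam = (\<lambda>t. 0) \<longleftrightarrow> solves_F N (forcing N g) lam z"
proof -
  have "Fmap N g z lam = (\<lambda>t. 0) \<longleftrightarrow> (\<forall>t\<ge>0. Fmap N g z lam t = 0)"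
    by (auto simp: fun_eq_iff Fmap_def)
  also have "\<dots> \<longleftrightarrow> solves_F N (forcing N g) lam z"
    by (auto simp: solves_F_def Fmap_eq_lin_op algebra_simps)
  finally show ?thesis .
qed

definition Fz_op :: "nat \<Rightarrow> (real \<Rightarrow> real) \<Rightarrow> (real \<Rightarrow> real) \<Rightarrow> real \<Rightarrow> real" where
  "Fz_op N z w t = (if t < 0 then 0 else lin_op N w t - (real N - 1) * z t * w t)"

lemma Fz_op_in_Ysp:
  assumes z: "z \<in> Xsp N b" and w: "w \<in> Xsp N b"
  shows "Fz_op N z w \<in> Ysp"
proof -
  have "Fz_op N z w = (\<lambda>t. if t < 0 then 0 else (- (real N - 1)) * z t * w t + lin_op N w t)"
    by (rule ext) (simp add: Fz_op_def algebra_simps)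
  thus ?thesis
    using Ysp_mult_add[OF XspD(7)[OF z] XspD(7)[OF w] decay_le_Xsp[OF z] decay_le_Xsp[OF w] lin_op_in_Ysp[OF w]]
    by simp
qed

lemma Ynorm_Fz_op_le:
  assumes N: "N \<ge> 2" and z: "z \<in> Xsp N b" and w: "w \<in> Xsp N b"
  shows "Ynorm (Fz_op N z w)
    \<le> (1 + \<bar>real N - 4\<bar> + \<bar>2 * real N - 4\<bar> + (real N - 1) * Xnorm z) * Xnorm w"
proof -
  note xw = decay_le_Xnorm[OF w] and xz = decay_le_Xnorm[OF z]
  have "decay_le (\<lambda>t. (-1) * d2 w t + (real N - 4) * d1 w t + (2 * real N - 4) * w t
      + (- (real N - 1)) * (z t * w t))
      (\<bar>-1\<bar> * Xnorm w + \<bar>real N - 4\<bar> * Xnorm w + \<bar>2 * real N - 4\<bar> * Xnorm w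
      + \<bar>- (real N - 1)\<bar> * (Xnorm z * Xnorm w))"
    by (intro decay_le_add decay_le_cmult decay_le_mult xw xz)
  hence "decay_le (Fz_op N z w)
      ((1 + \<bar>real N - 4\<bar> + \<bar>2 * real N - 4\<bar> + (real N - 1) * Xnorm z) * Xnorm w)"
    by (rule decay_le_cong[OF decay_le_mono]) (use N in \<open>simp_all add: Fz_op_def lin_op_def algebra_simps\<close>)
  thus ?thesis by (rule Ynorm_le)
qed

text \<open>F is quadratic in z, so the remainder of its linearisation is -(N-1)/2 w^2.\<close>

lemma Ynorm_Fmap_remainder_le:
  assumes z: "z \<in> Xsp N b" and w: "w \<in> Xsp N b"
  shows "Ynorm (\<lambda>t. Fmap N g (\<lambda>s. z s + w s) lam t - Fmap N g z lam t - Fz_op N z w t)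
    \<le> \<bar>real N - 1\<bar> / 2 * Xnorm w * Xnorm w"
proof -
  note xw = decay_le_Xnorm[OF w]
  have "decay_le (\<lambda>t. (- (real N - 1) / 2) * (w t * w t)) (\<bar>- (real N - 1) / 2\<bar> * (Xnorm w * Xnorm w))"
    by (intro decay_le_cmult decay_le_mult xw)
  hence "decay_le (\<lambda>t. Fmap N g (\<lambda>s. z s + w s) lam t - Fmap N g z lam t - Fz_op N z w t)
      (\<bar>real N - 1\<bar> / 2 * Xnorm w * Xnorm w)"
  proof (rule decay_le_cong[OF decay_le_mono])
    fix t :: real assume t: "t \<ge> 0"
    show "Fmap N g (\<lambda>s. z s + w s) lam t - Fmap N g z lam t - Fz_op N z w t = (- (real N - 1) / 2) * (w t * w t)"
      using t unfolding Fmap_eq_lin_op[OF t] Xsp_add(2)[OF z w] Fz_op_def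
      by (simp add: power2_eq_square field_simps)
  qed (simp add: abs_minus_commute mult.assoc)
  thus ?thesis by (rule Ynorm_le)
qed

lemma is_Fz_Fz_op:
  assumes N: "N \<ge> 2" and z: "z \<in> Xsp N b"
  shows "is_Fz N b g z lam (Fz_op N z)"
  unfolding is_Fz_def
proof (intro conjI ballI allI impI)
  fix w assume "w \<in> Xsp N b"
  thus "Fz_op N z w \<in> Ysp" by (rule Fz_op_in_Ysp[OF z])
next
  fix v w a c assume v: "v \<in> Xsp N b" and w: "w \<in> Xsp N b"
  show "Fz_op N z (\<lambda>t. a * v t + c * w t) = (\<lambda>t. a * Fz_op N z v t + c * Fz_op N z w t)"
    by (rule ext) (simp add: Fz_op_def lin_op_lincomb[OF v w] algebra_simps)
next
  show "\<exists>C. \<forall>w\<in>Xsp N b. Ynorm (Fz_op N z w) \<le> C * Xnorm w"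
    using Ynorm_Fz_op_le[OF N z] by blast
next
  fix e :: real assume e: "e > 0"
  define K where "K = real N - 1"
  have K1: "K \<ge> 1" using N by (simp add: K_def)
  show "\<exists>d>0. \<forall>w\<in>Xsp N b. Xnorm w < d \<longrightarrow>
      Ynorm (\<lambda>t. Fmap N g (\<lambda>s. z s + w s) lam t - Fmap N g z lam t - Fz_op N z w t) \<le> e * Xnorm w"
  proof (intro exI[of _ "2 * e / K"] conjI ballI impI)
    show "0 < 2 * e / K" using e K1 by simp
    fix w assume w: "w \<in> Xsp N b" and wd: "Xnorm w < 2 * e / K"
    have "\<bar>real N - 1\<bar> / 2 * Xnorm w * Xnorm w \<le> e * Xnorm w"
      using wd K1 decay_le_Xnorm(4)[OF w] by (intro mult_right_mono) (simp_all add: K_def field_simps)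
    thus "Ynorm (\<lambda>t. Fmap N g (\<lambda>s. z s + w s) lam t - Fmap N g z lam t - Fz_op N z w t) \<le> e * Xnorm w"
      using Ynorm_Fmap_remainder_le[OF z w, where g=g and lam=lam] by linarith
  qed
qed

lemma bij_betw_Fz_op:
  assumes N: "N \<ge> 2" and z: "z \<in> Xsp N b" and zr: "decay_le z \<rho>" and K\<rho>: "(real N - 1) * \<rho> \<le> 1/4"
  shows "bij_betw (Fz_op N z) (Xsp N b) Ysp"
  unfolding bij_betw_def
proof
  show "inj_on (Fz_op N z) (Xsp N b)"
  proof (rule inj_onI)
    fix v w assume v: "v \<in> Xsp N b" and w: "w \<in> Xsp N b" and eq: "Fz_op N z v = Fz_op N z w"
    have "(\<lambda>t. v t - w t) = (\<lambda>t. 0)"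
    proof (rule lin_op_perturbed_injective[OF N zr _ Xsp_diff(1)[OF v w]])
      show "(real N - 1) * \<rho> < 1" using K\<rho> by simp
      fix t :: real assume t: "t \<ge> 0"
      from fun_cong[OF eq, of t] t
      show "lin_op N (\<lambda>t. v t - w t) t = (real N - 1) * z t * (v t - w t)"
        unfolding Xsp_diff(2)[OF v w] by (simp add: Fz_op_def algebra_simps)
    qed
    thus "v = w" by (auto simp: fun_eq_iff)
  qed
  show "Fz_op N z ` Xsp N b = Ysp"
  proof
    show "Fz_op N z ` Xsp N b \<subseteq> Ysp" using Fz_op_in_Ysp[OF z] by auto
    show "Ysp \<subseteq> Fz_op N z ` Xsp N b"
    proof
      fix h assume h: "h \<in> Ysp"
      obtain w where w: "w \<in> Xsp N b" and Lw: "solves_Fz N z h w"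
        using solves_Fz_exists[OF N z zr K\<rho> h decay_le_Ynorm_Ysp[OF h]] by blast
      have "Fz_op N z w = h"
      proof
        fix t :: real
        show "Fz_op N z w t = h t"
          using YspD(1)[OF h, of t] solves_FzD[OF Lw, of t] by (cases "t < 0") (auto simp: Fz_op_def)
      qed
      thus "h \<in> Fz_op N z ` Xsp N b" using w by blast
    qed
  qed
qed

section \<open>The branch of small solutions\<close>

lemma C1_into_XI:
  assumes X: "\<And>l. l \<in> I \<Longrightarrow> zf l \<in> Xsp N b \<and> zf' l \<in> Xsp N b"
    and C: "C \<ge> 0" "C' \<ge> 0"
    and rem: "\<And>l m. l \<in> I \<Longrightarrow> m \<in> I \<Longrightarrow> Xnorm (\<lambda>t. zf m t - zf l t - (m - l) * zf' l t) \<le> C * (m - l)\<^sup>2"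
    and lip: "\<And>l m. l \<in> I \<Longrightarrow> m \<in> I \<Longrightarrow> Xnorm (\<lambda>t. zf' m t - zf' l t) \<le> C' * \<bar>m - l\<bar>"
  shows "C1_into_X N b I zf"
  unfolding C1_into_X_def
proof (intro exI[of _ zf'] conjI ballI allI impI)
  fix l assume "l \<in> I"
  thus "zf l \<in> Xsp N b" "zf' l \<in> Xsp N b" using X by auto
next
  fix l e assume l: "l \<in> I" and e: "(e::real) > 0"
  show "\<exists>d>0. \<forall>m\<in>I. \<bar>m - l\<bar> < d \<longrightarrow> Xnorm (\<lambda>t. zf m t - zf l t - (m - l) * zf' l t) \<le> e * \<bar>m - l\<bar>"
  proof (intro exI[of _ "e / (C + 1)"] conjI ballI impI)
    show "0 < e / (C + 1)" using e C by simp
    fix m assume m: "m \<in> I" and md: "\<bar>m - l\<bar> < e / (C + 1)"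
    have "C * \<bar>m - l\<bar> \<le> C * (e / (C + 1))" using md C by (intro mult_left_mono) auto
    also have "\<dots> \<le> e" using C e by (simp add: field_simps)
    finally have "(C * \<bar>m - l\<bar>) * \<bar>m - l\<bar> \<le> e * \<bar>m - l\<bar>" by (rule mult_right_mono) simp
    moreover have "(m - l)\<^sup>2 = \<bar>m - l\<bar> * \<bar>m - l\<bar>" by (simp add: power2_eq_square)
    ultimately have "C * (m - l)\<^sup>2 \<le> e * \<bar>m - l\<bar>" by (simp add: mult.assoc)
    thus "Xnorm (\<lambda>t. zf m t - zf l t - (m - l) * zf' l t) \<le> e * \<bar>m - l\<bar>" using rem[OF l m] by linarith
  qed
next
  fix l e assume l: "l \<in> I" and e: "(e::real) > 0"
  show "\<exists>d>0. \<forall>m\<in>I. \<bar>m - l\<bar> < d \<longrightarrow> Xnorm (\<lambda>t. zf' m t - zf' l t) < e"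
  proof (intro exI[of _ "e / (C' + 1)"] conjI ballI impI)
    show "0 < e / (C' + 1)" using e C by simp
    fix m assume m: "m \<in> I" and md: "\<bar>m - l\<bar> < e / (C' + 1)"
    have "C' * \<bar>m - l\<bar> \<le> C' * (e / (C' + 1))" using md C by (intro mult_left_mono) auto
    also have "\<dots> < e" using C e by (simp add: field_simps)
    finally show "Xnorm (\<lambda>t. zf' m t - zf' l t) < e" using lip[OF l m] by linarith
  qed
qed

text \<open>The derivative of the branch is the solution of F_z w = f.\<close>

lemma C1_into_X_solution_branch:
  assumes N: "N \<ge> 2" and K\<rho>: "(real N - 1) * \<rho> \<le> 1/4" and fY: "f \<in> Ysp"
    and zf: "\<And>lam. lam \<in> I \<Longrightarrow> zf lam \<in> Xsp N b \<and> decay_le (zf lam) \<rho> \<and> solves_F N f lam (zf lam)"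
  shows "C1_into_X N b I zf"
proof -
  define F0 where "F0 = Ynorm f"
  have fb: "decay_le f F0" unfolding F0_def by (rule decay_le_Ynorm_Ysp[OF fY])
  define R where "R = 2 * F0 + 1"
  have "\<forall>lam\<in>I. \<exists>w. w \<in> Xsp N b \<and> decay_le w R \<and> solves_Fz N (zf lam) f w"
  proof
    fix lam assume "lam \<in> I"
    hence "zf lam \<in> Xsp N b" "decay_le (zf lam) \<rho>" using zf by simp_all
    from solves_Fz_exists[OF N this K\<rho> fY fb]
    show "\<exists>w. w \<in> Xsp N b \<and> decay_le w R \<and> solves_Fz N (zf lam) f w" by (auto simp: R_def)
  qed
  then obtain zf' where zf': "\<forall>lam\<in>I. zf' lam \<in> Xsp N b \<and> decay_le (zf' lam) R \<and> solves_Fz N (zf lam) f (zf' lam)"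
    by (rule bchoice[THEN exE])
  have F00: "F0 \<ge> 0" using decay_le_nonneg[OF fb] .
  show ?thesis
  proof (rule C1_into_XI[where zf'=zf'])
    fix l m assume l: "l \<in> I" and m: "m \<in> I"
    note zl = zf[OF l] and zm = zf[OF m] and wl = zf'[rule_format, OF l] and wm = zf'[rule_format, OF m]
    show "zf l \<in> Xsp N b \<and> zf' l \<in> Xsp N b" using zl wl by simp
    show "Xnorm (\<lambda>t. zf m t - zf l t - (m - l) * zf' l t)
        \<le> (9 + \<bar>real N - 4\<bar>) * (real N - 1) * (2 * F0)\<^sup>2 * (m - l)\<^sup>2"
      by (rule solves_F_derivative_estimate[where b=b, OF N K\<rho> fb]) (use zl zm wl in simp_all)
    show "Xnorm (\<lambda>t. zf' m t - zf' l t)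
        \<le> 2 * (9 + \<bar>real N - 4\<bar>) * (real N - 1) * (2 * F0) * R * \<bar>m - l\<bar>"
      by (rule solves_Fz_lipschitz[where b=b and zm="zf m" and zl="zf l", OF N K\<rho> fb]) (use zl zm wl wm in simp_all)
  qed (use N F00 in \<open>simp_all add: R_def\<close>)
qed

lemma Xnorm_le_solves_F:
  assumes N: "N \<ge> 2" and z: "z \<in> Xsp N b" "decay_le z \<rho>" and fb: "decay_le f F0"
    and L: "solves_F N f lam z"
  shows "Xnorm z \<le> (9 + \<bar>real N - 4\<bar>) * ((real N - 1) / 2 * \<rho>\<^sup>2 + \<bar>lam\<bar> * F0)"
proof -
  have "decay_le (\<lambda>t. (real N - 1) / 2 * (z t * z t) + lam * f t) (\<bar>(real N - 1) / 2\<bar> * (\<rho> * \<rho>) + \<bar>lam\<bar> * F0)"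
    by (intro decay_le_add decay_le_cmult decay_le_mult z(2) fb)
  hence "decay_le (lin_op N z) ((real N - 1) / 2 * \<rho>\<^sup>2 + \<bar>lam\<bar> * F0)"
    by (rule decay_le_cong[OF decay_le_mono]) (use N L in \<open>auto simp: solves_FD power2_eq_square\<close>)
  thus ?thesis by (rule Xnorm_le_lin_op[OF N z(1)])
qed

lemma Xnorm_zero: "Xnorm (\<lambda>t. 0) = 0"
proof -
  have z0: "decay_le (\<lambda>t. 0) 0" by (simp add: decay_le_def)
  have "Xnorm (\<lambda>t::real. 0::real) \<le> 0 + 0 + 0"
  proof (rule Xnorm_le[OF z0])
    show "decay_le (d1 (\<lambda>t. 0)) 0" "decay_le (d2 (\<lambda>t. 0)) 0"
      by (rule decay_le_cong[OF z0], simp add: zero_in_Xsp)+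
  qed
  thus ?thesis using decay_le_Xnorm(4)[OF zero_in_Xsp(1)] by simp
qed

lemma solves_F_zero: "solves_F N f 0 (\<lambda>t. 0)"
  by (simp add: solves_F_def lin_op_def zero_in_Xsp)

lemma solves_F_branch_exists:
  assumes N: "N \<ge> 2" and fY: "f \<in> Ysp" and fb: "decay_le f F0" and \<rho>0: "\<rho> > 0"
    and K\<rho>: "(real N - 1) * \<rho> \<le> 1/4" and \<delta>: "\<delta> * F0 \<le> \<rho> / 2"
  obtains zf where
    "\<And>lam. \<bar>lam\<bar> < \<delta> \<Longrightarrow> zf lam \<in> Xsp N b \<and> decay_le (zf lam) \<rho> \<and> solves_F N f lam (zf lam)"
proof -
  have "\<forall>lam\<in>ball 0 \<delta>. \<exists>z. z \<in> Xsp N b \<and> decay_le z \<rho> \<and> solves_F N f lam z"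
  proof
    fix lam :: real assume "lam \<in> ball 0 \<delta>"
    hence "\<bar>lam\<bar> * F0 \<le> \<rho> / 2"
      using mult_right_mono[of "\<bar>lam\<bar>" \<delta> F0] decay_le_nonneg[OF fb] \<delta> by simp
    from solves_F_exists[where b=b, OF N fY fb \<rho>0 K\<rho> this]
    show "\<exists>z. z \<in> Xsp N b \<and> decay_le z \<rho> \<and> solves_F N f lam z" by blast
  qed
  then obtain zf where "\<forall>lam\<in>ball 0 \<delta>. zf lam \<in> Xsp N b \<and> decay_le (zf lam) \<rho> \<and> solves_F N f lam (zf lam)"
    by (rule bchoice[THEN exE])
  thus thesis by (intro that[of zf]) simp
qed

lemma solution_branch:
  assumes N: "N \<ge> 2" and fY: "f \<in> Ysp"
  obtains r \<delta> \<rho> zf where "r > 0" "\<delta> > 0" "(real N - 1) * \<rho> \<le> 1/4"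
    "\<And>lam. \<bar>lam\<bar> < \<delta> \<Longrightarrow>
       zf lam \<in> Xsp N b \<and> decay_le (zf lam) \<rho> \<and> Xnorm (zf lam) < r \<and> solves_F N f lam (zf lam)"
    "\<And>lam z. \<bar>lam\<bar> < \<delta> \<Longrightarrow> z \<in> Xsp N b \<Longrightarrow> Xnorm z < r \<Longrightarrow> solves_F N f lam z \<Longrightarrow> z = zf lam"
    "C1_into_X N b (ball 0 \<delta>) zf" "zf 0 = (\<lambda>t. 0)"
proof -
  define K where "K = real N - 1"
  define CX where "CX = 9 + \<bar>real N - 4\<bar>"
  define F0 where "F0 = Ynorm f"
  \<comment> \<open>(N-1) r = 1 gives uniqueness in the r-ball; since CX bounds the X-norm of z by the
    Y-norm of L z, the \<rho>-small solutions have X-norm well below r.\<close>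
  define r where "r = 1 / K"
  define \<rho> where "\<rho> = r / (4 * CX)"
  define \<delta> where "\<delta> = \<rho> / (2 * F0 + 1)"
  have fb: "decay_le f F0" unfolding F0_def by (rule decay_le_Ynorm_Ysp[OF fY])
  have K1: "K \<ge> 1" using N by (simp add: K_def)
  have CX9: "CX \<ge> 9" by (simp add: CX_def)
  have F00: "F0 \<ge> 0" using decay_le_nonneg[OF fb] .
  have r0: "r > 0" and Kr: "K * r = 1" using K1 by (simp_all add: r_def)
  have \<rho>0: "\<rho> > 0" and \<rho>r: "\<rho> < r" and CX\<rho>: "CX * \<rho> = r / 4"
    using r0 CX9 by (simp_all add: \<rho>_def field_simps)
  have K\<rho>: "K * \<rho> \<le> 1/4" using Kr CX9 by (simp add: \<rho>_def field_simps)
  have \<delta>0: "\<delta> > 0" using \<rho>0 F00 by (simp add: \<delta>_def)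
  have \<delta>F: "\<delta> * F0 \<le> \<rho> / 2" using F00 \<rho>0 by (simp add: \<delta>_def field_simps)
  have lamF: "\<bar>lam\<bar> * F0 \<le> \<rho> / 2" if "\<bar>lam\<bar> < \<delta>" for lam
    using mult_right_mono[of "\<bar>lam\<bar>" \<delta> F0] that F00 \<delta>F by simp
  obtain zf where zf: "\<And>lam. \<bar>lam\<bar> < \<delta> \<Longrightarrow> zf lam \<in> Xsp N b \<and> decay_le (zf lam) \<rho> \<and> solves_F N f lam (zf lam)"
    using solves_F_branch_exists[where b=b, OF N fY fb \<rho>0 K\<rho>[unfolded K_def] \<delta>F] by blast
  have small: "Xnorm (zf lam) < r" if lam: "\<bar>lam\<bar> < \<delta>" for lam
  proof -
    have "Xnorm (zf lam) \<le> CX * (K / 2 * \<rho>\<^sup>2 + \<bar>lam\<bar> * F0)"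
      using zf[OF lam] Xnorm_le_solves_F[OF N _ _ fb, of "zf lam" b \<rho> lam] unfolding CX_def K_def by blast
    also have "\<dots> = (K * \<rho>) * (CX * \<rho>) / 2 + CX * (\<bar>lam\<bar> * F0)" by (simp add: power2_eq_square algebra_simps)
    also have "\<dots> \<le> (1/4) * (r / 4) / 2 + CX * (\<rho> / 2)"
      using K\<rho> CX\<rho> r0 CX9 F00 lamF[OF lam] by (intro add_mono divide_right_mono mult_mono) auto
    also have "\<dots> < r" using CX\<rho> r0 by simp
    finally show ?thesis .
  qed
  have unique: "z = zf lam" if "\<bar>lam\<bar> < \<delta>" "z \<in> Xsp N b" "Xnorm z < r" "solves_F N f lam z" for lam z
  proof (rule solves_F_unique[where A=r and B=\<rho>, OF N that(2) _ conjunct1[OF zf[OF that(1)]] _ _ that(4)])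
    show "decay_le z r" using decay_le_Xnorm(1)[OF that(2)] that(3) by (simp add: decay_le_mono)
    show "decay_le (zf lam) \<rho>" "solves_F N f lam (zf lam)" using zf[OF that(1)] by simp_all
    have "K * ((r + \<rho>) / 2) < K * r" using K1 \<rho>r by simp
    thus "(real N - 1) * ((r + \<rho>) / 2) < 1" using Kr by (simp add: K_def)
  qed
  have C1: "C1_into_X N b (ball 0 \<delta>) zf"
    by (rule C1_into_X_solution_branch[OF N K\<rho>[unfolded K_def] fY]) (use zf in auto)
  have "(\<lambda>t. 0) = zf 0"
    by (rule unique) (use \<delta>0 r0 zero_in_Xsp(1) Xnorm_zero solves_F_zero in auto)
  thus thesis
    using r0 \<delta>0 K\<rho> zf small unique C1 by (intro that[of r \<delta> \<rho> zf]) (simp_all add: K_def)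
qed

theorem theorem4p5:
  fixes N :: nat and g :: "real \<Rightarrow> real" and b :: bc
  assumes "N \<ge> 2"
    and "set_integrable lborel {0..1} g"
    and "((\<lambda>t. exp ((real N - 3) * t) * (LBINT s=0..exp (- t). g s)) \<longlongrightarrow> 0) at_top"
  shows "\<exists>U I zf.
     U \<subseteq> Xsp N b \<and> (\<exists>r>0. {z \<in> Xsp N b. Xnorm z < r} \<subseteq> U) \<and>
     open I \<and> (0::real) \<in> I \<and>
     (\<forall>lam\<in>I. zf lam \<in> U \<and> Fmap N g (zf lam) lam = (\<lambda>t. 0) \<and>
        (\<forall>z\<in>U. Fmap N g z lam = (\<lambda>t. 0) \<longrightarrow> z = zf lam)) \<and>
     C1_into_X N b I zf \<and>
     zf 0 = (\<lambda>t. 0) \<and>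
     (\<forall>lam\<in>I. \<exists>L. is_Fz N b g (zf lam) lam L \<and> bij_betw L (Xsp N b) Ysp)"
proof -
  obtain r \<delta> \<rho> zf where r: "r > 0" and \<delta>: "\<delta> > 0" and K\<rho>: "(real N - 1) * \<rho> \<le> 1/4"
    and zf: "\<And>lam. \<bar>lam\<bar> < \<delta> \<Longrightarrow> zf lam \<in> Xsp N b \<and> decay_le (zf lam) \<rho> \<and> Xnorm (zf lam) < r
       \<and> solves_F N (forcing N g) lam (zf lam)"
    and unique: "\<And>lam z. \<bar>lam\<bar> < \<delta> \<Longrightarrow> z \<in> Xsp N b \<Longrightarrow> Xnorm z < r
       \<Longrightarrow> solves_F N (forcing N g) lam z \<Longrightarrow> z = zf lam"
    and C1: "C1_into_X N b (ball 0 \<delta>) zf" and zf0: "zf 0 = (\<lambda>t. 0)"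
    using solution_branch[where b=b, OF assms(1) forcing_in_Ysp[OF assms(2,3)]] by blast
  define U where "U = {z \<in> Xsp N b. Xnorm z < r}"
  show ?thesis
  proof (intro exI[of _ U] exI[of _ "ball 0 \<delta>"] exI[of _ zf] conjI C1 zf0)
    show "U \<subseteq> Xsp N b" "\<exists>r>0. {z \<in> Xsp N b. Xnorm z < r} \<subseteq> U" using r by (auto simp: U_def)
    show "open (ball 0 \<delta>)" "(0::real) \<in> ball 0 \<delta>" using \<delta> by auto
    show "\<forall>lam\<in>ball 0 \<delta>. zf lam \<in> U \<and> Fmap N g (zf lam) lam = (\<lambda>t. 0) \<and>
        (\<forall>z\<in>U. Fmap N g z lam = (\<lambda>t. 0) \<longrightarrow> z = zf lam)"
      using zf unique by (auto simp: U_def Fmap_eq_zero_iff)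
    show "\<forall>lam\<in>ball 0 \<delta>. \<exists>L. is_Fz N b g (zf lam) lam L \<and> bij_betw L (Xsp N b) Ysp"
    proof
      fix lam :: real assume "lam \<in> ball 0 \<delta>"
      hence "zf lam \<in> Xsp N b" "decay_le (zf lam) \<rho>" using zf by auto
      thus "\<exists>L. is_Fz N b g (zf lam) lam L \<and> bij_betw L (Xsp N b) Ysp"
        using is_Fz_Fz_op[OF assms(1)] bij_betw_Fz_op[OF assms(1) _ _ K\<rho>] by blast
    qed
  qed
qed

end
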